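(* The following decision problem is undecidable. Input: a FIFO automaton $A$ satisfying (R1) and (R2), and a letter $m$. Question: is there a trace $\tau$ such that $\tau\cdot ?m$ is a trace of $A$ (i.e. $c_0\xrightarrow{\tau\cdot ?m}c$ for some configuration $c$, where $c_0$ is the initial configuration of $A$)?
   Context: A FIFO automaton is a finite automaton $A=(Q,\mathrm{Act}(\Sigma),\Delta,q_0)$ with all states accepting, over the alphabet $\mathrm{Act}(\Sigma)=\{!a,?a\mid a\in\Sigma\}$ for a finite set $\Sigma$, operating on a single unbounded FIFO queue. A configuration is $(q,w)\in Q\times\Sigma^*$, stable if $w$ is empty; the initial configuration is $c_0=(q_0,\varepsilon)$. A transition $(q,!a,q')$ takes $(q,w)$ to $(q',w a)$; a transition $(q,?a,q')$ takes $(q,a w)$ to $(q',w)$. A trace of $A$ is a sequence of actions $\tau$ with $c_0\xrightarrow{\tau}c$ for some $c$. Restrictions: (R1) whenever $c_0\xrightarrow{\tau}(q,w)$, either $\tau$ is empty or $w\neq\varepsilon$ (every reachable configuration other than the initial one is unstable); (R2) every transition $(q_0,\alpha,q)\in\Delta$ leaving the initial state has $\alpha=!a$ for some $a\in\Sigma$. *)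

theory Defs
  imports Main "HOL-Library.Nat_Bijection"
begin

datatype recf =
    Zf
  | Sf
  | Idf nat
  | Cnf recf "recf list"
  | Prf recf recf
  | Mnf recf

inductive eval :: "recf \<Rightarrow> nat list \<Rightarrow> nat \<Rightarrow> bool" where
  ev_Z: "eval Zf xs 0"
| ev_S: "eval Sf (x # xs) (Suc x)"
| ev_Id: "i < length xs \<Longrightarrow> eval (Idf i) xs (xs ! i)"
| ev_Cn: "list_all2 (\<lambda>g z. eval g xs z) gs zs \<Longrightarrow> eval f zs y \<Longrightarrow> eval (Cnf f gs) xs y"
| ev_Pr0: "eval f xs y \<Longrightarrow> eval (Prf f g) (0 # xs) y"
| ev_PrS: "eval (Prf f g) (n # xs) z \<Longrightarrow> eval g (n # z # xs) y \<Longrightarrow> eval (Prf f g) (Suc n # xs) y"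
| ev_Mn: "eval f (y # xs) 0 \<Longrightarrow> (\<And>z. z < y \<Longrightarrow> \<exists>v. v \<noteq> 0 \<and> eval f (z # xs) v)
          \<Longrightarrow> eval (Mnf f) xs y"

text \<open>States and letters are natural numbers (any finite automaton is isomorphic
  to one of this form). The transition relation is given as a finite list.\<close>
datatype act = Send nat | Recv nat

type_synonym trans = "nat \<times> act \<times> nat"
type_synonym config = "nat \<times> nat list"

fun step :: "trans list \<Rightarrow> config \<Rightarrow> act \<Rightarrow> config \<Rightarrow> bool" where
  "step \<Delta> (q, w) (Send a) (q', w') \<longleftrightarrow> (q, Send a, q') \<in> set \<Delta> \<and> w' = w @ [a]"
| "step \<Delta> (q, w) (Recv a) (q', w') \<longleftrightarrow> (q, Recv a, q') \<in> set \<Delta> \<and> w = a # w'"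

fun steps :: "trans list \<Rightarrow> config \<Rightarrow> act list \<Rightarrow> config \<Rightarrow> bool" where
  "steps \<Delta> c [] c' \<longleftrightarrow> c' = c"
| "steps \<Delta> c (\<alpha> # \<tau>) c' \<longleftrightarrow> (\<exists>c''. step \<Delta> c \<alpha> c'' \<and> steps \<Delta> c'' \<tau> c')"

definition is_trace :: "trans list \<Rightarrow> nat \<Rightarrow> act list \<Rightarrow> bool" where
  "is_trace \<Delta> q0 \<tau> \<longleftrightarrow> (\<exists>c. steps \<Delta> (q0, []) \<tau> c)"

definition R1 :: "trans list \<Rightarrow> nat \<Rightarrow> bool" where
  "R1 \<Delta> q0 \<longleftrightarrow> (\<forall>\<tau> q w. steps \<Delta> (q0, []) \<tau> (q, w) \<longrightarrow> \<tau> = [] \<or> w \<noteq> [])"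

definition R2 :: "trans list \<Rightarrow> nat \<Rightarrow> bool" where
  "R2 \<Delta> q0 \<longleftrightarrow> (\<forall>\<alpha> q. (q0, \<alpha>, q) \<in> set \<Delta> \<longrightarrow> (\<exists>a. \<alpha> = Send a))"

definition can_receive :: "trans list \<Rightarrow> nat \<Rightarrow> nat \<Rightarrow> bool" where
  "can_receive \<Delta> q0 m \<longleftrightarrow> (\<exists>\<tau>. is_trace \<Delta> q0 (\<tau> @ [Recv m]))"

fun encode_act :: "act \<Rightarrow> nat" where
  "encode_act (Send a) = 2 * a"
| "encode_act (Recv a) = 2 * a + 1"

fun encode_trans :: "trans \<Rightarrow> nat" where
  "encode_trans (q, \<alpha>, q') = prod_encode (q, prod_encode (encode_act \<alpha>, q'))"

definition encode_instance :: "trans list \<Rightarrow> nat \<Rightarrow> nat \<Rightarrow> nat" where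
  "encode_instance \<Delta> q0 m = prod_encode (list_encode (map encode_trans \<Delta>), prod_encode (q0, m))"

end

theory Submission
  imports Defs
begin

text \<open>A FIFO automaton can simulate a counter machine: the registers are kept in the queue as
  unary blocks behind a marker, and an instruction on a register rotates the whole queue once,
  acting on that register's block on the way. Partial recursive functions compile into counter
  programs, so such an automaton can evaluate any partial recursive function.

  Suppose F decided the problem. The diagonal automaton first writes the code of its simulation
  part into its queue; the code of the whole automaton is a recursive function of it. It then
  evaluates F on its own code. If the answer is yes, it halts in a dead state; otherwise it sends
  the message, rotates it to the front and receives it. The automaton is deterministic except for
  receptions of different letters, so every run is a prefix of this one run and the message can
  be received exactly when F says no. It satisfies (R2) because its initial state only sends, and
  (R1) because each state fixes a positive number of markers in the queue.\<close>

lemma eval_IdfI: "i < length xs \<Longrightarrow> y = xs ! i \<Longrightarrow> eval (Idf i) xs y"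
  using ev_Id by simp
lemma eval_SfI: "y = Suc x \<Longrightarrow> eval Sf (x # xs) y"
  using ev_S by simp
lemma eval_ZfI: "y = 0 \<Longrightarrow> eval Zf xs y"
  using ev_Z by simp
lemma eval_Cnf_singleI: "eval g xs z \<Longrightarrow> eval f [z] y \<Longrightarrow> eval (Cnf f [g]) xs y"
  by (rule ev_Cn) auto
lemma eval_Cnf_pairI: "eval g1 xs z1 \<Longrightarrow> eval g2 xs z2 \<Longrightarrow> eval f [z1, z2] y \<Longrightarrow> eval (Cnf f [g1, g2]) xs y"
  by (rule ev_Cn) auto
lemmas eval_basic_intros = eval_IdfI eval_SfI eval_Cnf_singleI eval_Cnf_pairI eval_ZfI ev_Pr0

fun const_recf :: "nat \<Rightarrow> recf" where
  "const_recf 0 = Zf" | "const_recf (Suc n) = Cnf Sf [const_recf n]"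

lemma eval_const_recf: "eval (const_recf n) xs n"
  by (induction n) (auto intro!: eval_basic_intros)

definition add_recf :: "recf" where
  "add_recf = Prf (Idf 0) (Cnf Sf [Idf 1])"

lemma eval_add_recf: "y = a + b \<Longrightarrow> eval add_recf [a, b] y"
  unfolding add_recf_def
proof (induction a arbitrary: y)
  case 0 then show ?case by (auto intro!: eval_basic_intros)
next
  case (Suc a)
  have "eval (Cnf Sf [Idf 1]) [a, a+b, b] y"
    using Suc by (auto intro!: eval_basic_intros)
  then show ?case using Suc by (auto intro: ev_PrS)
qed

definition mult_recf :: "recf" where
  "mult_recf = Prf Zf (Cnf add_recf [Idf 1, Idf 2])"

lemma eval_mult_recf: "y = a * b \<Longrightarrow> eval mult_recf [a, b] y"
  unfolding mult_recf_def
proof (induction a arbitrary: y)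
  case 0 then show ?case by (auto intro!: eval_basic_intros)
next
  case (Suc a)
  have "eval (Cnf add_recf [Idf 1, Idf 2]) [a, a*b, b] y"
    using Suc by (auto intro!: eval_basic_intros eval_add_recf)
  then show ?case using Suc by (auto intro: ev_PrS)
qed

definition pred_recf :: "recf" where
  "pred_recf = Prf Zf (Idf 0)"

lemma eval_pred_recf: "y = a - 1 \<Longrightarrow> eval pred_recf [a] y"
  unfolding pred_recf_def
proof (induction a arbitrary: y)
  case 0 then show ?case by (auto intro!: eval_basic_intros)
next
  case (Suc n)
  have "eval (Idf 0) [n, n - 1] y" using Suc by (auto intro!: eval_basic_intros)
  then show ?case using Suc by (auto intro: ev_PrS)
qed

definition rev_diff_recf :: "recf" where
  "rev_diff_recf = Prf (Idf 0) (Cnf pred_recf [Idf 1])"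

lemma eval_rev_diff_recf: "y = a - n \<Longrightarrow> eval rev_diff_recf [n, a] y"
  unfolding rev_diff_recf_def
proof (induction n arbitrary: y)
  case 0 then show ?case by (auto intro!: eval_basic_intros)
next
  case (Suc n)
  have "eval (Cnf pred_recf [Idf 1]) [n, a - n, a] y"
    using Suc by (auto intro!: eval_basic_intros eval_pred_recf)
  then show ?case using Suc by (auto intro: ev_PrS)
qed

definition not_recf :: "recf" where
  "not_recf = Prf (const_recf 1) Zf"

lemma eval_not_recf: "y = 1 - a \<Longrightarrow> eval not_recf [a] y"
  unfolding not_recf_def
proof (induction a arbitrary: y)
  case 0 then show ?case by (auto intro!: eval_basic_intros eval_const_recf)
next
  case (Suc n)
  have "eval Zf [n, 1 - n] y" using Suc by (auto intro!: eval_basic_intros)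
  then show ?case using Suc by (auto intro: ev_PrS)
qed

definition triangle_recf :: "recf" where
  "triangle_recf = Prf Zf (Cnf add_recf [Idf 1, Cnf Sf [Idf 0]])"

lemma eval_triangle_recf: "y = triangle a \<Longrightarrow> eval triangle_recf [a] y"
  unfolding triangle_recf_def
proof (induction a arbitrary: y)
  case 0 then show ?case by (auto intro!: eval_basic_intros)
next
  case (Suc n)
  have "eval (Cnf add_recf [Idf 1, Cnf Sf [Idf 0]]) [n, triangle n] y"
    using Suc by (auto intro!: eval_basic_intros eval_add_recf)
  then show ?case using Suc by (auto intro: ev_PrS)
qed

definition prod_encode_recf :: "recf" where
  "prod_encode_recf = Cnf add_recf [Cnf triangle_recf [add_recf], Idf 0]"

lemma eval_prod_encode_recf: "y = prod_encode (a, b) \<Longrightarrow> eval prod_encode_recf [a, b] y"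
  unfolding prod_encode_recf_def prod_encode_def
  by (auto intro!: eval_basic_intros eval_add_recf eval_triangle_recf)

datatype nexp = NVar nat | NConst nat | NAdd nexp nexp | NMult nexp nexp | NDiff nexp nexp | NPair nexp nexp | NNot nexp

fun nval :: "nexp \<Rightarrow> nat list \<Rightarrow> nat" where
  "nval (NVar i) xs = xs ! i"
| "nval (NConst n) xs = n"
| "nval (NAdd a b) xs = nval a xs + nval b xs"
| "nval (NMult a b) xs = nval a xs * nval b xs"
| "nval (NDiff a b) xs = nval a xs - nval b xs"
| "nval (NPair a b) xs = prod_encode (nval a xs, nval b xs)"
| "nval (NNot a) xs = 1 - nval a xs"

fun nexp_vars_below :: "nexp \<Rightarrow> nat \<Rightarrow> bool" where
  "nexp_vars_below (NVar i) n = (i < n)"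
| "nexp_vars_below (NConst _) n = True"
| "nexp_vars_below (NAdd a b) n = (nexp_vars_below a n \<and> nexp_vars_below b n)"
| "nexp_vars_below (NMult a b) n = (nexp_vars_below a n \<and> nexp_vars_below b n)"
| "nexp_vars_below (NDiff a b) n = (nexp_vars_below a n \<and> nexp_vars_below b n)"
| "nexp_vars_below (NPair a b) n = (nexp_vars_below a n \<and> nexp_vars_below b n)"
| "nexp_vars_below (NNot a) n = nexp_vars_below a n"

fun recf_of_nexp :: "nexp \<Rightarrow> recf" where
  "recf_of_nexp (NVar i) = Idf i"
| "recf_of_nexp (NConst n) = const_recf n"
| "recf_of_nexp (NAdd a b) = Cnf add_recf [recf_of_nexp a, recf_of_nexp b]"
| "recf_of_nexp (NMult a b) = Cnf mult_recf [recf_of_nexp a, recf_of_nexp b]"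
| "recf_of_nexp (NDiff a b) = Cnf rev_diff_recf [recf_of_nexp b, recf_of_nexp a]"
| "recf_of_nexp (NPair a b) = Cnf prod_encode_recf [recf_of_nexp a, recf_of_nexp b]"
| "recf_of_nexp (NNot a) = Cnf not_recf [recf_of_nexp a]"

lemma eval_recf_of_nexp: "nexp_vars_below e (length xs) \<Longrightarrow> eval (recf_of_nexp e) xs (nval e xs)"
  by (induction e) (auto intro!: eval_basic_intros eval_add_recf eval_mult_recf eval_rev_diff_recf eval_prod_encode_recf eval_not_recf eval_const_recf)

section \<open>Counter programs\<close>

datatype cmd = Skip | Inc nat | Dec nat | Seq cmd cmd | While nat cmd

inductive exec :: "cmd \<Rightarrow> (nat \<Rightarrow> nat) \<Rightarrow> (nat \<Rightarrow> nat) \<Rightarrow> bool" where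
  ex_Skip: "exec Skip s s"
| ex_Inc: "exec (Inc r) s (s(r := Suc (s r)))"
| ex_Dec: "exec (Dec r) s (s(r := s r - 1))"
| ex_Seq: "exec c1 s s1 \<Longrightarrow> exec c2 s1 s2 \<Longrightarrow> exec (Seq c1 c2) s s2"
| ex_W0: "s r = 0 \<Longrightarrow> exec (While r c) s s"
| ex_W1: "s r \<noteq> 0 \<Longrightarrow> exec c s s1 \<Longrightarrow> exec (While r c) s1 s2 \<Longrightarrow> exec (While r c) s s2"

lemma exec_While_invariant:
  assumes step: "\<And>t. I t \<Longrightarrow> t r \<noteq> 0 \<Longrightarrow> \<exists>t'. exec c t t' \<and> I t' \<and> (m t' :: nat) < m t"
  shows "I t \<Longrightarrow> \<exists>t'. exec (While r c) t t' \<and> I t' \<and> t' r = 0"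
proof (induction "m t" arbitrary: t rule: less_induct)
  case less
  show ?case
  proof (cases "t r = 0")
    case True then show ?thesis using less by (auto intro: ex_W0)
  next
    case False
    then obtain t1 where t1: "exec c t t1" "I t1" "m t1 < m t" using step less by blast
    then obtain t2 where "exec (While r c) t1 t2 \<and> I t2 \<and> t2 r = 0" using less by blast
    then show ?thesis using t1 False by (auto intro: ex_W1)
  qed
qed

lemma exec_Seq_DecI: "exec c2 (s(r := s r - 1)) s2 \<Longrightarrow> exec (Seq (Dec r) c2) s s2"
  by (rule ex_Seq[OF ex_Dec])

lemma exec_Seq_IncI: "exec c2 (s(r := Suc (s r))) s2 \<Longrightarrow> exec (Seq (Inc r) c2) s s2"
  by (rule ex_Seq[OF ex_Inc])

lemma exec_DecI: "s' = s(r := s r - 1) \<Longrightarrow> exec (Dec r) s s'"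
  using ex_Dec by simp

lemma exec_IncI: "s' = s(r := Suc (s r)) \<Longrightarrow> exec (Inc r) s s'"
  using ex_Inc by simp

definition clear :: "nat \<Rightarrow> cmd" where
  "clear r = While r (Dec r)"

lemma exec_clear: "exec (clear r) s (s(r := 0))"
  unfolding clear_def
proof (induction "s r" arbitrary: s)
  case 0 then show ?case by (simp add: ex_W0 fun_upd_idem)
next
  case (Suc n)
  have "exec (While r (Dec r)) (s(r := s r - 1)) (s(r := 0))"
    using Suc.hyps(1)[of "s(r := s r - 1)"] Suc.hyps(2) by simp
  then show ?case using Suc.hyps(2) by (auto intro: ex_W1 ex_Dec)
qed

lemma exec_add_to:
  assumes "a \<noteq> b"
  shows "exec (While a (Seq (Dec a) (Inc b))) s (s(a := 0, b := s b + s a))"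
proof (induction "s a" arbitrary: s)
  case 0 then show ?case by (simp add: ex_W0 fun_upd_idem)
next
  case (Suc n)
  let ?s1 = "s(a := s a - 1, b := Suc (s b))"
  have "exec (Seq (Dec a) (Inc b)) s ?s1"
    using assms by (auto intro!: exec_Seq_DecI exec_IncI)
  moreover have "exec (While a (Seq (Dec a) (Inc b))) ?s1 (s(a := 0, b := s b + s a))"
    using Suc.hyps(1)[of ?s1] Suc.hyps(2) assms by (simp add: fun_upd_twist)
  ultimately show ?case using Suc.hyps(2) by (auto intro: ex_W1)
qed

lemma exec_add_to_both:
  assumes "a \<noteq> b" "a \<noteq> t" "b \<noteq> t"
  shows "exec (While a (Seq (Dec a) (Seq (Inc b) (Inc t)))) s (s(a := 0, b := s b + s a, t := s t + s a))"
proof (induction "s a" arbitrary: s)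
  case 0 then show ?case by (simp add: ex_W0 fun_upd_idem)
next
  case (Suc n)
  let ?s1 = "s(a := s a - 1, b := Suc (s b), t := Suc (s t))"
  have "exec (Seq (Dec a) (Seq (Inc b) (Inc t))) s ?s1"
    using assms by (auto intro!: exec_Seq_DecI exec_Seq_IncI exec_IncI)
  moreover have "exec (While a (Seq (Dec a) (Seq (Inc b) (Inc t)))) ?s1
      (s(a := 0, b := s b + s a, t := s t + s a))"
    using Suc.hyps(1)[of ?s1] Suc.hyps(2) assms by (simp add: fun_upd_twist)
  ultimately show ?case using Suc.hyps(2) by (auto intro: ex_W1)
qed

definition copy :: "nat \<Rightarrow> nat \<Rightarrow> nat \<Rightarrow> cmd" where
  "copy a b t = Seq (clear b) (Seq (clear t)
   (Seq (While a (Seq (Dec a) (Seq (Inc b) (Inc t)))) (While t (Seq (Dec t) (Inc a)))))"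

lemma exec_copy:
  assumes "a \<noteq> b" "a \<noteq> t" "b \<noteq> t"
  shows "exec (copy a b t) s (s(b := s a, t := 0))"
proof -
  let ?s1 = "s(b := 0, t := 0)" and ?s2 = "s(a := 0, b := s a, t := s a)"
  have "exec (clear b) s (s(b := 0))" and "exec (clear t) (s(b := 0)) ?s1"
    by (rule exec_clear)+
  moreover have "exec (While a (Seq (Dec a) (Seq (Inc b) (Inc t)))) ?s1 ?s2"
    using exec_add_to_both[OF assms, of ?s1] assms by (simp add: fun_upd_twist)
  moreover have "exec (While t (Seq (Dec t) (Inc a))) ?s2 (s(b := s a, t := 0))"
  proof -
    have "?s2(t := 0, a := ?s2 a + ?s2 t) = s(b := s a, t := 0)"
      using assms by (auto simp: fun_eq_iff)
    then show ?thesis using exec_add_to[of t a ?s2] assms by simp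
  qed
  ultimately show ?thesis unfolding copy_def by (blast intro: ex_Seq)
qed

section \<open>Compiling partial recursive functions into counter programs\<close>

lemma eval_ZfD: "eval Zf xs y \<Longrightarrow> y = 0" by (cases rule: eval.cases) auto
lemma eval_SfD: "eval Sf xs y \<Longrightarrow> \<exists>x xs'. xs = x # xs' \<and> y = Suc x" by (cases rule: eval.cases) auto
lemma eval_IdfD: "eval (Idf i) xs y \<Longrightarrow> i < length xs \<and> y = xs ! i" by (cases rule: eval.cases) auto
lemma eval_CnfD: "eval (Cnf f gs) xs y \<Longrightarrow> \<exists>zs. list_all2 (\<lambda>g z. eval g xs z) gs zs \<and> eval f zs y"
  by (cases rule: eval.cases) auto
lemma eval_MnfD: "eval (Mnf f) xs y \<Longrightarrow> eval f (y # xs) 0 \<and> (\<forall>z<y. \<exists>v. v \<noteq> 0 \<and> eval f (z # xs) v)"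
  by (cases rule: eval.cases) auto
lemma eval_Prf_Nil: "eval (Prf f g) [] y \<Longrightarrow> False" by (cases rule: eval.cases) auto

lemma eval_PrfD: "eval (Prf f g) (n # xs) y \<Longrightarrow>
  \<exists>zs. length zs = Suc n \<and> zs ! n = y \<and> eval f xs (zs ! 0) \<and> (\<forall>j<n. eval g (j # zs ! j # xs) (zs ! Suc j))"
proof (induction n arbitrary: y)
  case 0
  from 0 have "eval f xs y" by (cases rule: eval.cases) auto
  then show ?case by (intro exI[of _ "[y]"]) auto
next
  case (Suc n)
  from Suc.prems obtain z where z: "eval (Prf f g) (n # xs) z" "eval g (n # z # xs) y"
    by (cases rule: eval.cases) auto
  then obtain zs where zs: "length zs = Suc n" "zs ! n = z" "eval f xs (zs ! 0)"
     "\<forall>j<n. eval g (j # zs ! j # xs) (zs ! Suc j)" using Suc.IH by blast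
  show ?case
  proof (intro exI[of _ "zs @ [y]"] conjI allI impI)
    fix j assume "j < Suc n"
    then show "eval g (j # (zs @ [y]) ! j # xs) ((zs @ [y]) ! Suc j)"
      using zs z by (cases "j = n") (auto simp: nth_append)
  qed (use zs in \<open>auto simp: nth_append\<close>)
qed

text \<open>compile_recf g ins out fr computes g on the registers ins into register out, using the
  registers from fr on as scratch space. For primitive recursion, fr counts the steps, fr+1 the
  remaining steps, fr+2 holds the current value and fr+3 the next one; for minimisation, fr holds
  the candidate and fr+1 the value of f at it.\<close>
fun compile_recf :: "recf \<Rightarrow> nat list \<Rightarrow> nat \<Rightarrow> nat \<Rightarrow> cmd"
and compile_recfs :: "recf list \<Rightarrow> nat list \<Rightarrow> nat \<Rightarrow> nat \<Rightarrow> cmd" where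
  "compile_recf Zf ins out fr = clear out"
| "compile_recf Sf ins out fr = (case ins of [] \<Rightarrow> Skip | r # _ \<Rightarrow> Seq (copy r out fr) (Inc out))"
| "compile_recf (Idf i) ins out fr = (if i < length ins then copy (ins ! i) out fr else Skip)"
| "compile_recf (Cnf f gs) ins out fr =
     Seq (compile_recfs gs ins fr (fr + length gs)) (compile_recf f [fr..<fr + length gs] out (fr + length gs))"
| "compile_recf (Prf f g) ins out fr = (case ins of [] \<Rightarrow> Skip | rn # xs \<Rightarrow>
     Seq (copy rn (fr+1) (fr+4)) (Seq (clear fr) (Seq (compile_recf f xs (fr+2) (fr+4))
      (Seq (While (fr+1) (Seq (compile_recf g (fr # (fr+2) # xs) (fr+3) (fr+4))
              (Seq (copy (fr+3) (fr+2) (fr+4)) (Seq (Inc fr) (Dec (fr+1))))))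
        (copy (fr+2) out (fr+4))))))"
| "compile_recf (Mnf f) ins out fr = Seq (clear fr) (Seq (compile_recf f (fr # ins) (fr+1) (fr+2))
     (Seq (While (fr+1) (Seq (Inc fr) (compile_recf f (fr # ins) (fr+1) (fr+2)))) (copy fr out (fr+2))))"
| "compile_recfs [] ins j fr = Skip"
| "compile_recfs (g # gs) ins j fr = Seq (compile_recf g ins j fr) (compile_recfs gs ins (Suc j) fr)"

definition result_written :: "nat \<Rightarrow> nat \<Rightarrow> nat \<Rightarrow> (nat \<Rightarrow> nat) \<Rightarrow> (nat \<Rightarrow> nat) \<Rightarrow> bool" where
  "result_written fr out y s s' \<longleftrightarrow> (\<forall>r<fr. s' r = (if r = out then y else s r))"

definition compiles_correctly :: "recf \<Rightarrow> bool" where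
  "compiles_correctly g \<longleftrightarrow> (\<forall>ins out fr s y. eval g (map s ins) y \<longrightarrow> (\<forall>r\<in>set ins. r < fr) \<longrightarrow> out < fr \<longrightarrow> out \<notin> set ins
     \<longrightarrow> (\<exists>s'. exec (compile_recf g ins out fr) s s' \<and> result_written fr out y s s'))"

lemma compiles_correctlyD: "compiles_correctly g \<Longrightarrow> eval g (map s ins) y \<Longrightarrow> (\<forall>r\<in>set ins. r < fr) \<Longrightarrow> out < fr \<Longrightarrow> out \<notin> set ins
     \<Longrightarrow> \<exists>s'. exec (compile_recf g ins out fr) s s' \<and> result_written fr out y s s'"
  unfolding compiles_correctly_def by blast

lemma compiles_correctly_Zf: "compiles_correctly Zf"
  unfolding compiles_correctly_def result_written_def
  by (auto dest!: eval_ZfD intro!: exI[of _ "s(out := 0)" for s out] exec_clear)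

lemma compiles_correctly_Sf: "compiles_correctly Sf"
  unfolding compiles_correctly_def
proof (intro allI impI)
  fix ins :: "nat list" and out fr y :: nat and s :: "nat \<Rightarrow> nat"
  assume e: "eval Sf (map s ins) y" and h: "\<forall>r\<in>set ins. r < fr" "out < fr" "out \<notin> set ins"
  obtain r rs where ins: "ins = r # rs" and y: "y = Suc (s r)" using eval_SfD[OF e] by (cases ins) auto
  have "exec (copy r out fr) s (s(out := s r, fr := 0))"
    by (rule exec_copy) (use h ins in auto)
  then have "exec (compile_recf Sf ins out fr) s ((s(out := s r, fr := 0))(out := Suc (s r)))"
    using ins h by (auto intro!: ex_Seq exec_IncI)
  then show "\<exists>s'. exec (compile_recf Sf ins out fr) s s' \<and> result_written fr out y s s'"
    using h y by (intro exI) (auto simp: result_written_def)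
qed

lemma compiles_correctly_Idf: "compiles_correctly (Idf i)"
  unfolding compiles_correctly_def
proof (intro allI impI)
  fix ins :: "nat list" and out fr y :: nat and s :: "nat \<Rightarrow> nat"
  assume e: "eval (Idf i) (map s ins) y" and h: "\<forall>r\<in>set ins. r < fr" "out < fr" "out \<notin> set ins"
  have i: "i < length ins" and y: "y = s (ins ! i)" using eval_IdfD[OF e] by auto
  have "exec (copy (ins ! i) out fr) s (s(out := s (ins ! i), fr := 0))"
    by (rule exec_copy) (use h i nth_mem[OF i] in auto)
  then show "\<exists>s'. exec (compile_recf (Idf i) ins out fr) s s' \<and> result_written fr out y s s'"
    using h i y by (intro exI) (auto simp: result_written_def)
qed

lemma exec_compile_recfs:
  "(\<forall>g\<in>set gs. compiles_correctly g) \<Longrightarrow> list_all2 (\<lambda>g z. eval g (map s ins) z) gs zs \<Longrightarrow> (\<forall>r\<in>set ins. r < j)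
   \<Longrightarrow> j + length gs \<le> fr \<Longrightarrow>
   \<exists>s'. exec (compile_recfs gs ins j fr) s s' \<and> (\<forall>r<fr. s' r = (if j \<le> r \<and> r < j + length gs then zs ! (r - j) else s r))"
proof (induction gs arbitrary: zs j s)
  case Nil then show ?case by (auto intro: ex_Skip)
next
  case (Cons g gs)
  obtain z zs' where zs: "zs = z # zs'" "eval g (map s ins) z" "list_all2 (\<lambda>g z. eval g (map s ins) z) gs zs'"
    using Cons.prems(2) by (cases zs) auto
  obtain s1 where s1: "exec (compile_recf g ins j fr) s s1" "result_written fr j z s s1"
    using compiles_correctlyD[of g s ins z fr j] Cons.prems zs by force
  have m: "map s1 ins = map s ins"
    using s1(2) Cons.prems unfolding result_written_def by (force simp: map_eq_conv)
  obtain s2 where s2: "exec (compile_recfs gs ins (Suc j) fr) s1 s2"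
    "\<forall>r<fr. s2 r = (if Suc j \<le> r \<and> r < Suc j + length gs then zs' ! (r - Suc j) else s1 r)"
    using Cons.IH[of s1 zs' "Suc j"] Cons.prems zs m by force
  show ?case
  proof (intro exI conjI allI impI)
    show "exec (compile_recfs (g # gs) ins j fr) s s2" using s1 s2 by (auto intro: ex_Seq)
    fix r assume r: "r < fr"
    show "s2 r = (if j \<le> r \<and> r < j + length (g # gs) then zs ! (r - j) else s r)"
    proof (cases "r = j")
      case True then show ?thesis using s1(2) s2(2) r zs unfolding result_written_def by auto
    next
      case False
      then show ?thesis using s1(2) s2(2) r zs unfolding result_written_def
        by (auto simp: Suc_diff_Suc[symmetric] nth_Cons')
    qed
  qed
qed

lemma compiles_correctly_Cnf: "compiles_correctly f \<Longrightarrow> (\<forall>g\<in>set gs. compiles_correctly g) \<Longrightarrow> compiles_correctly (Cnf f gs)"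
  unfolding compiles_correctly_def[of "Cnf f gs"]
proof (intro allI impI)
  fix ins :: "nat list" and out fr y :: nat and s :: "nat \<Rightarrow> nat"
  assume f: "compiles_correctly f" and gs: "\<forall>g\<in>set gs. compiles_correctly g"
  assume e: "eval (Cnf f gs) (map s ins) y" and h: "\<forall>r\<in>set ins. r < fr" "out < fr" "out \<notin> set ins"
  obtain zs where zs: "list_all2 (\<lambda>g z. eval g (map s ins) z) gs zs" "eval f zs y"
    using eval_CnfD[OF e] by blast
  have len: "length zs = length gs" using zs(1) list_all2_lengthD by metis
  obtain s1 where s1: "exec (compile_recfs gs ins fr (fr + length gs)) s s1"
    "\<forall>r<fr + length gs. s1 r = (if fr \<le> r \<and> r < fr + length gs then zs ! (r - fr) else s r)"
    using exec_compile_recfs[OF gs zs(1), of fr "fr + length gs"] h by auto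
  have m: "map s1 [fr..<fr + length gs] = zs"
    using s1(2) len by (intro nth_equalityI) auto
  obtain s2 where s2: "exec (compile_recf f [fr..<fr + length gs] out (fr + length gs)) s1 s2"
    "result_written (fr + length gs) out y s1 s2"
    using compiles_correctlyD[OF f, of s1 "[fr..<fr + length gs]" y "fr + length gs" out] m zs h by auto
  show "\<exists>s'. exec (compile_recf (Cnf f gs) ins out fr) s s' \<and> result_written fr out y s s'"
    using s1 s2 unfolding result_written_def by (intro exI[of _ s2]) (auto intro: ex_Seq)
qed

lemma compiles_correctly_Prf: "compiles_correctly f \<Longrightarrow> compiles_correctly g \<Longrightarrow> compiles_correctly (Prf f g)"
  unfolding compiles_correctly_def[of "Prf f g"]
proof (intro allI impI)
  fix ins :: "nat list" and out fr y :: nat and s :: "nat \<Rightarrow> nat"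
  assume f: "compiles_correctly f" and g: "compiles_correctly g"
  assume e: "eval (Prf f g) (map s ins) y" and h: "\<forall>r\<in>set ins. r < fr" "out < fr" "out \<notin> set ins"
  obtain rn xs where ins: "ins = rn # xs" using e eval_Prf_Nil by (cases ins) auto
  define n where "n = s rn"
  obtain zs where zs: "length zs = Suc n" "zs ! n = y" "eval f (map s xs) (zs ! 0)"
     "\<forall>j<n. eval g (j # zs ! j # map s xs) (zs ! Suc j)"
    using eval_PrfD[of f g n "map s xs" y] e ins n_def by auto
  define s1 where "s1 = s(fr+1 := s rn, fr+4 := 0)"
  have e1: "exec (copy rn (fr+1) (fr+4)) s s1" unfolding s1_def by (rule exec_copy) (use h ins in auto)
  define s2 where "s2 = s1(fr := 0)"
  have e2: "exec (clear fr) s1 s2" unfolding s2_def by (rule exec_clear)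
  have m2: "map s2 xs = map s xs" using h ins unfolding s2_def s1_def by (auto simp: map_eq_conv)
  obtain s3 where s3: "exec (compile_recf f xs (fr+2) (fr+4)) s2 s3" "result_written (fr+4) (fr+2) (zs ! 0) s2 s3"
    using compiles_correctlyD[OF f, of s2 xs "zs ! 0" "fr+4" "fr+2"] m2 zs h ins by force
  let ?body = "Seq (compile_recf g (fr # (fr+2) # xs) (fr+3) (fr+4))
              (Seq (copy (fr+3) (fr+2) (fr+4)) (Seq (Inc fr) (Dec (fr+1))))"
  let ?I = "\<lambda>t. \<exists>j\<le>n. t fr = j \<and> t (fr+1) = n - j \<and> t (fr+2) = zs ! j \<and> (\<forall>r<fr. t r = s r)"
  have "\<exists>t'. exec (While (fr+1) ?body) s3 t' \<and> ?I t' \<and> t' (fr+1) = 0"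
  proof (rule exec_While_invariant[where m = "\<lambda>t. t (fr+1)"])
    fix t assume I: "?I t" and nz: "t (fr+1) \<noteq> 0"
    then obtain j where j: "j < n" "t fr = j" "t (fr+1) = n - j" "t (fr+2) = zs ! j" "\<forall>r<fr. t r = s r"
      by force
    have mt: "map t (fr # (fr+2) # xs) = j # zs ! j # map s xs"
      using j h ins by auto
    obtain t1 where t1: "exec (compile_recf g (fr # (fr+2) # xs) (fr+3) (fr+4)) t t1" "result_written (fr+4) (fr+3) (zs ! Suc j) t t1"
      using compiles_correctlyD[OF g, of t "fr # (fr+2) # xs" "zs ! Suc j" "fr+4" "fr+3"] mt zs j h ins by force
    define t2 where "t2 = t1(fr+2 := t1 (fr+3), fr+4 := 0)"
    have e2: "exec (copy (fr+3) (fr+2) (fr+4)) t1 t2" unfolding t2_def by (rule exec_copy) auto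
    define t4 where "t4 = t2(fr := Suc (t2 fr), fr+1 := t2 (fr+1) - 1)"
    have e4: "exec (Seq (Inc fr) (Dec (fr+1))) t2 t4" unfolding t4_def
      by (rule ex_Seq, rule ex_Inc, rule exec_DecI) auto
    have "?I t4" using t1(2) j unfolding t4_def t2_def result_written_def
      by (intro exI[of _ "Suc j"]) auto
    moreover have "t4 (fr+1) < t (fr+1)" using t1(2) j unfolding t4_def t2_def result_written_def by auto
    ultimately show "\<exists>t'. exec ?body t t' \<and> ?I t' \<and> t' (fr+1) < t (fr+1)"
      using t1(1) e2 e4 by (blast intro: ex_Seq)
  next
    show "?I s3" using s3(2) h unfolding result_written_def s2_def s1_def n_def
      by (intro exI[of _ 0]) auto
  qed
  then obtain t' where t': "exec (While (fr+1) ?body) s3 t'" "?I t'" "t' (fr+1) = 0" by blast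
  then have tz: "t' (fr+2) = y" "\<forall>r<fr. t' r = s r" using zs by auto
  define s' where "s' = t'(out := t' (fr+2), fr+4 := 0)"
  have e5: "exec (copy (fr+2) out (fr+4)) t' s'" unfolding s'_def by (rule exec_copy) (use h in auto)
  have "exec (compile_recf (Prf f g) ins out fr) s s'"
    using e1 e2 s3(1) t'(1) e5 ins by (auto intro!: ex_Seq)
  moreover have "result_written fr out y s s'" using tz h unfolding result_written_def s'_def by auto
  ultimately show "\<exists>s'. exec (compile_recf (Prf f g) ins out fr) s s' \<and> result_written fr out y s s'" by blast
qed

lemma eval_MnfE:
  assumes "eval (Mnf f) xs y"
  obtains val where "\<And>j. j \<le> y \<Longrightarrow> eval f (j # xs) (val j) \<and> (val j = 0 \<longleftrightarrow> j = y)"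
proof
  have e0: "eval f (y # xs) 0" and enz: "\<forall>z<y. \<exists>v. v \<noteq> 0 \<and> eval f (z # xs) v"
    using eval_MnfD[OF assms] by auto
  define val where "val j = (if j = y then 0 else SOME v. v \<noteq> 0 \<and> eval f (j # xs) v)" for j
  fix j assume "j \<le> y"
  show "eval f (j # xs) (val j) \<and> (val j = 0 \<longleftrightarrow> j = y)"
  proof (cases "j = y")
    case True then show ?thesis using e0 by (simp add: val_def)
  next
    case False
    then have "\<exists>v. v \<noteq> 0 \<and> eval f (j # xs) v" using enz \<open>j \<le> y\<close> by auto
    from someI_ex[OF this] show ?thesis using False by (simp add: val_def)
  qed
qed

lemma compiles_correctly_Mnf: "compiles_correctly f \<Longrightarrow> compiles_correctly (Mnf f)"
  unfolding compiles_correctly_def[of "Mnf f"]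
proof (intro allI impI)
  fix ins :: "nat list" and out fr y :: nat and s :: "nat \<Rightarrow> nat"
  assume f: "compiles_correctly f"
  assume e: "eval (Mnf f) (map s ins) y" and h: "\<forall>r\<in>set ins. r < fr" "out < fr" "out \<notin> set ins"
  obtain val where val: "\<And>j. j \<le> y \<Longrightarrow> eval f (j # map s ins) (val j) \<and> (val j = 0 \<longleftrightarrow> j = y)"
    using eval_MnfE[OF e] by metis
  define s1 where "s1 = s(fr := 0)"
  have e1: "exec (clear fr) s s1" unfolding s1_def by (rule exec_clear)
  have m1: "map s1 (fr # ins) = 0 # map s ins" using h unfolding s1_def by auto
  obtain s2 where s2: "exec (compile_recf f (fr # ins) (fr+1) (fr+2)) s1 s2" "result_written (fr+2) (fr+1) (val 0) s1 s2"
    using compiles_correctlyD[OF f, of s1 "fr # ins" "val 0" "fr+2" "fr+1"] m1 val[of 0] h by force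
  let ?body = "Seq (Inc fr) (compile_recf f (fr # ins) (fr+1) (fr+2))"
  let ?I = "\<lambda>t. \<exists>j\<le>y. t fr = j \<and> t (fr+1) = val j \<and> (\<forall>r<fr. t r = s r)"
  have "\<exists>t'. exec (While (fr+1) ?body) s2 t' \<and> ?I t' \<and> t' (fr+1) = 0"
  proof (rule exec_While_invariant[where m = "\<lambda>t. y - t fr"])
    fix t assume I: "?I t" and nz: "t (fr+1) \<noteq> 0"
    then obtain j where j: "j \<le> y" "t fr = j" "t (fr+1) = val j" "\<forall>r<fr. t r = s r"
      by force
    then have jy: "j < y" using val[of j] nz by (cases "j = y") auto
    define t1 where "t1 = t(fr := Suc j)"
    have mt: "map t1 (fr # ins) = Suc j # map s ins"
      using j h unfolding t1_def by auto
    obtain t2 where t2: "exec (compile_recf f (fr # ins) (fr+1) (fr+2)) t1 t2" "result_written (fr+2) (fr+1) (val (Suc j)) t1 t2"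
      using compiles_correctlyD[OF f, of t1 "fr # ins" "val (Suc j)" "fr+2" "fr+1"] mt val[of "Suc j"] jy h by force
    have body: "exec ?body t t2" using t2(1) j unfolding t1_def by (auto intro!: ex_Seq exec_IncI)
    have "?I t2" using t2(2) j jy unfolding t1_def result_written_def
      by (intro exI[of _ "Suc j"]) auto
    moreover have "y - t2 fr < y - t fr" using t2(2) j jy unfolding t1_def result_written_def by auto
    ultimately show "\<exists>t'. exec ?body t t' \<and> ?I t' \<and> y - t' fr < y - t fr"
      using body by blast
  next
    show "?I s2" using s2(2) h unfolding result_written_def s1_def
      by (intro exI[of _ 0]) auto
  qed
  then obtain t' where t': "exec (While (fr+1) ?body) s2 t'" "?I t'" "t' (fr+1) = 0" by blast
    obtain j where j: "j \<le> y" "t' fr = j" "t' (fr+1) = val j" "\<forall>r<fr. t' r = s r"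
    using t'(2) by blast
  have tz: "t' fr = y" "\<forall>r<fr. t' r = s r" using j val[OF j(1)] t'(3) by auto
  define s' where "s' = t'(out := t' fr, fr+2 := 0)"
  have e5: "exec (copy fr out (fr+2)) t' s'" unfolding s'_def by (rule exec_copy) (use h in auto)
  have "exec (compile_recf (Mnf f) ins out fr) s s'"
    using e1 s2(1) t'(1) e5 by (auto intro!: ex_Seq)
  moreover have "result_written fr out y s s'" using tz h unfolding result_written_def s'_def by auto
  ultimately show "\<exists>s'. exec (compile_recf (Mnf f) ins out fr) s s' \<and> result_written fr out y s s'" by blast
qed

lemma compiles_correctly_all: "compiles_correctly g"
  by (induction g) (auto intro: compiles_correctly_Zf compiles_correctly_Sf compiles_correctly_Idf compiles_correctly_Cnf compiles_correctly_Prf compiles_correctly_Mnf)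

section \<open>Transition tables\<close>

text \<open>The first component of an entry predicts the number of markers (letters 2 and 3) in the
  queue whenever the automaton is in that state.\<close>
datatype behaviour = Snd nat nat | Rcv "(nat \<times> nat) list"
type_synonym entry = "nat \<times> behaviour"

fun state_trans :: "nat \<Rightarrow> behaviour \<Rightarrow> trans list" where
  "state_trans i (Snd a q) = [(i, Send a, q)]"
| "state_trans i (Rcv l) = map (\<lambda>(a, q). (i, Recv a, q)) l"

definition table_trans :: "entry list \<Rightarrow> trans list" where
  "table_trans tbl = concat (map (\<lambda>i. state_trans i (snd (tbl ! i))) [0..<length tbl])"

lemma state_trans_source: "(x, \<alpha>, y) \<in> set (state_trans i b) \<Longrightarrow> x = i"
  by (cases b) auto

lemma mem_table_trans: "(q, \<alpha>, q') \<in> set (table_trans tbl) \<longleftrightarrow> q < length tbl \<and>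
   (case snd (tbl ! q) of Snd a p \<Rightarrow> \<alpha> = Send a \<and> q' = p | Rcv l \<Rightarrow> \<exists>a. \<alpha> = Recv a \<and> (a, q') \<in> set l)"
proof -
  have "(q, \<alpha>, q') \<in> set (table_trans tbl) \<longleftrightarrow> (\<exists>i<length tbl. (q, \<alpha>, q') \<in> set (state_trans i (snd (tbl ! i))))"
    by (auto simp: table_trans_def)
  also have "\<dots> \<longleftrightarrow> q < length tbl \<and> (q, \<alpha>, q') \<in> set (state_trans q (snd (tbl ! q)))"
    using state_trans_source by blast
  also have "\<dots> \<longleftrightarrow> q < length tbl \<and>
   (case snd (tbl ! q) of Snd a p \<Rightarrow> \<alpha> = Send a \<and> q' = p | Rcv l \<Rightarrow> \<exists>a. \<alpha> = Recv a \<and> (a, q') \<in> set l)"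
    by (cases "snd (tbl ! q)") auto
  finally show ?thesis .
qed

definition placed_at :: "entry list \<Rightarrow> nat \<Rightarrow> entry list \<Rightarrow> bool" where
  "placed_at tbl u frag \<longleftrightarrow> u + length frag \<le> length tbl \<and> (\<forall>i<length frag. tbl ! (u + i) = frag ! i)"

lemma placed_at_append: "placed_at tbl u (f1 @ f2) \<Longrightarrow> placed_at tbl u f1 \<and> placed_at tbl (u + length f1) f2"
proof -
  assume h: "placed_at tbl u (f1 @ f2)"
  have "placed_at tbl u f1" unfolding placed_at_def
  proof (intro conjI allI impI)
    show "u + length f1 \<le> length tbl" using h by (auto simp: placed_at_def)
    fix i assume "i < length f1"
    then show "tbl ! (u + i) = f1 ! i" using h unfolding placed_at_def
      by (metis length_append nth_append trans_less_add1)
  qed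
  moreover have "placed_at tbl (u + length f1) f2" unfolding placed_at_def
  proof (intro conjI allI impI)
    show "u + length f1 + length f2 \<le> length tbl" using h by (auto simp: placed_at_def)
    fix i assume "i < length f2"
    then show "tbl ! (u + length f1 + i) = f2 ! i" using h unfolding placed_at_def
      by (metis add.assoc length_append nat_add_left_cancel_less nth_append_length_plus)
  qed
  ultimately show ?thesis ..
qed

lemma placed_at_Cons: "placed_at tbl u (e # f) \<Longrightarrow> u < length tbl \<and> tbl ! u = e \<and> placed_at tbl (Suc u) f"
  unfolding placed_at_def by fastforce

lemma placed_at_middle: "placed_at (pre @ f @ pst) (length pre) f"
  unfolding placed_at_def by (auto simp: nth_append)

lemma placed_at_middleI: "u = length pre \<Longrightarrow> placed_at (pre @ f @ pst) u f"
  using placed_at_middle by blast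

lemma steps_append: "steps D c (t1 @ t2) c'' \<longleftrightarrow> (\<exists>c'. steps D c t1 c' \<and> steps D c' t2 c'')"
  by (induction t1 arbitrary: c) auto

text \<open>The letter 4 is the message whose reception is asked about.\<close>
definition reach :: "trans list \<Rightarrow> config \<Rightarrow> config \<Rightarrow> bool" where
  "reach D c c' \<longleftrightarrow> (\<exists>\<tau>. steps D c \<tau> c' \<and> Recv 4 \<notin> set \<tau>)"

lemma reach_refl: "reach D c c"
  unfolding reach_def by (intro exI[of _ "[]"]) auto

lemma reach_trans: "reach D c c' \<Longrightarrow> reach D c' c'' \<Longrightarrow> reach D c c''"
proof -
  assume "reach D c c'" "reach D c' c''"
  then obtain t1 t2 where "steps D c t1 c'" "Recv 4 \<notin> set t1" "steps D c' t2 c''" "Recv 4 \<notin> set t2"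
    unfolding reach_def by blast
  moreover have "steps D c (t1 @ t2) c''" using calculation steps_append by blast
  ultimately show ?thesis unfolding reach_def by (intro exI[of _ "t1 @ t2"]) auto
qed

lemma reach_send: "q < length tbl \<Longrightarrow> snd (tbl ! q) = Snd a p \<Longrightarrow> reach (table_trans tbl) (q, w) (p, w @ [a])"
  unfolding reach_def
  by (intro exI[of _ "[Send a]"]) (auto simp: mem_table_trans)

lemma reach_recv: "q < length tbl \<Longrightarrow> snd (tbl ! q) = Rcv l \<Longrightarrow> (a, p) \<in> set l \<Longrightarrow> a \<noteq> 4 \<Longrightarrow>
   reach (table_trans tbl) (q, a # w) (p, w)"
  unfolding reach_def
  by (intro exI[of _ "[Recv a]"]) (auto simp: mem_table_trans)

text \<open>Register values are stored in the queue as unary blocks 1^n 2, following the marker 3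
  (queue_code). The rotation placed at u moves n blocks from the front of the queue to its back
  and continues in tgt; entry_or n u tgt is its entry state.\<close>
definition ublock :: "nat \<Rightarrow> nat list" where "ublock n = replicate n 1 @ [2]"
definition ublocks :: "nat list \<Rightarrow> nat list" where "ublocks ns = concat (map ublock ns)"

definition entry_or :: "nat \<Rightarrow> nat \<Rightarrow> nat \<Rightarrow> nat" where "entry_or n u tgt = (if n = 0 then tgt else u)"

fun rotation :: "nat \<Rightarrow> nat \<Rightarrow> nat \<Rightarrow> nat \<Rightarrow> entry list" where
  "rotation k 0 u tgt = []"
| "rotation k (Suc n) u tgt = [(Suc k, Rcv [(1, u+1), (2, u+2)]), (Suc k, Snd 1 u), (k, Snd 2 (entry_or n (u+3) tgt))]
     @ rotation k n (u+3) tgt"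

lemma length_rotation[simp]: "length (rotation k n u tgt) = 3 * n"
  by (induction n arbitrary: u) auto

lemma placed_at_rotation: "placed_at tbl u (rotation k (Suc n) u tgt) \<Longrightarrow>
  u + 2 < length tbl \<and> tbl ! u = (Suc k, Rcv [(1, u+1), (2, u+2)]) \<and> tbl ! (u+1) = (Suc k, Snd 1 u) \<and>
  tbl ! (u+2) = (k, Snd 2 (entry_or n (u+3) tgt)) \<and> placed_at tbl (u+3) (rotation k n (u+3) tgt)"
proof -
  assume h: "placed_at tbl u (rotation k (Suc n) u tgt)"
  let ?e = "[(Suc k, Rcv [(1, u+1), (2, u+2)]), (Suc k, Snd 1 u), (k, Snd 2 (entry_or n (u+3) tgt))]"
  have split: "placed_at tbl u (?e @ rotation k n (u+3) tgt)" using h by simp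
  have h1: "placed_at tbl u ?e" using placed_at_append[OF split] by blast
  have h2: "placed_at tbl (u + length ?e) (rotation k n (u+3) tgt)" using placed_at_append[OF split] by blast
  then have h2: "placed_at tbl (u+3) (rotation k n (u+3) tgt)" by (simp only: length_Cons list.size(3) numeral_3_eq_3)
  from h1 show ?thesis using h2 by (auto dest!: placed_at_Cons)
qed

lemma rotation_moves_block: "placed_at tbl u (rotation k (Suc n) u tgt) \<Longrightarrow> reach (table_trans tbl) (u, ublock v @ w) (entry_or n (u+3) tgt, w @ ublock v)"
proof (induction v arbitrary: w)
  case 0
  note a = placed_at_rotation[OF 0]
  have r1: "reach (table_trans tbl) (u, 2 # w) (u+2, w)"
    by (rule reach_recv[of u tbl _ 2 "u+2"]) (use a in auto)
  have r2: "reach (table_trans tbl) (u+2, w) (entry_or n (u+3) tgt, w @ [2])"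
    by (rule reach_send) (use a in auto)
  show ?case using reach_trans[OF r1 r2] by (simp add: ublock_def)
next
  case (Suc v)
  note a = placed_at_rotation[OF Suc.prems]
  have r1: "reach (table_trans tbl) (u, 1 # ublock v @ w) (u+1, ublock v @ w)"
    by (rule reach_recv[of u tbl _ 1 "u+1"]) (use a in auto)
  have r2: "reach (table_trans tbl) (u+1, ublock v @ w) (u, ublock v @ w @ [1])"
    using reach_send[of "u+1" tbl 1 u "ublock v @ w"] a by auto
  have r3: "reach (table_trans tbl) (u, ublock v @ (w @ [1])) (entry_or n (u+3) tgt, (w @ [1]) @ ublock v)"
    by (rule Suc.IH[OF Suc.prems])
  have "reach (table_trans tbl) (u, 1 # ublock v @ w) (entry_or n (u+3) tgt, (w @ [1]) @ ublock v)"
    using reach_trans[OF r1 reach_trans[OF r2]] r3 by simp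
  then show ?case by (simp add: ublock_def)
qed

lemma rotation_run: "placed_at tbl u (rotation k n u tgt) \<Longrightarrow> length ns = n \<Longrightarrow>
   reach (table_trans tbl) (entry_or n u tgt, ublocks ns @ w) (tgt, w @ ublocks ns)"
proof (induction ns arbitrary: n u w)
  case Nil then show ?case by (auto simp: entry_or_def ublocks_def intro: reach_refl)
next
  case (Cons v ns)
  then obtain n' where n: "n = Suc n'" "length ns = n'" by auto
  have r1: "reach (table_trans tbl) (u, ublock v @ ublocks ns @ w) (entry_or n' (u+3) tgt, ublocks ns @ w @ ublock v)"
    using rotation_moves_block[of tbl u k n' tgt v "ublocks ns @ w"] Cons.prems n by simp
  have r2: "reach (table_trans tbl) (entry_or n' (u+3) tgt, ublocks ns @ (w @ ublock v)) (tgt, w @ ublock v @ ublocks ns)"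
    using Cons.IH[of "u+3" n' "w @ ublock v"] placed_at_rotation[of tbl u k n' tgt] Cons.prems n by simp
  show ?case using reach_trans[OF r1 r2] n by (simp add: entry_or_def ublocks_def)
qed

lemma rotation_run_append_one: "placed_at tbl u (rotation k (Suc n) u tgt) \<Longrightarrow> reach (table_trans tbl) (u+1, ublock v @ w) (entry_or n (u+3) tgt, w @ ublock (Suc v))"
proof -
  assume h: "placed_at tbl u (rotation k (Suc n) u tgt)"
  note a = placed_at_rotation[OF h]
  have r2: "reach (table_trans tbl) (u+1, ublock v @ w) (u, ublock v @ w @ [1])"
    using reach_send[of "u+1" tbl 1 u "ublock v @ w"] a by auto
  have r3: "reach (table_trans tbl) (u, ublock v @ (w @ [1])) (entry_or n (u+3) tgt, (w @ [1]) @ ublock v)"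
    by (rule rotation_moves_block[OF h])
  have "reach (table_trans tbl) (u+1, ublock v @ w) (entry_or n (u+3) tgt, (w @ [1]) @ ublock v)"
    using reach_trans[OF r2] r3 by simp
  then show ?thesis by (simp add: ublock_def)
qed

lemma rotation_run_append_sep: "placed_at tbl u (rotation k (Suc n) u tgt) \<Longrightarrow> reach (table_trans tbl) (u+2, w) (entry_or n (u+3) tgt, w @ [2])"
  using placed_at_rotation[of tbl u k n tgt] reach_send[of "u+2" tbl 2 "entry_or n (u+3) tgt" w] by auto

definition marker_pass :: "nat \<Rightarrow> nat \<Rightarrow> nat \<Rightarrow> entry list" where
  "marker_pass k u t = [(Suc k, Rcv [(3, u+1)]), (k, Snd 3 t)]"

lemma placed_at_gadget: "placed_at tbl u (marker_pass k u t @ rotation k r (u+2) b @ e # rest) \<Longrightarrow> b = u+2+3*r \<Longrightarrow>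
  placed_at tbl u (marker_pass k u t) \<and> placed_at tbl (u+2) (rotation k r (u+2) b) \<and> b < length tbl \<and> tbl ! b = e \<and> placed_at tbl (Suc b) rest"
proof -
  assume h: "placed_at tbl u (marker_pass k u t @ rotation k r (u+2) b @ e # rest)" and b: "b = u+2+3*r"
  have l: "length (marker_pass k u t) = 2" by (simp add: marker_pass_def)
  from placed_at_append[OF h] l have h1: "placed_at tbl u (marker_pass k u t)" and h2: "placed_at tbl (u+2) (rotation k r (u+2) b @ e # rest)"
    by auto
  from placed_at_append[OF h2] b have h3: "placed_at tbl (u+2) (rotation k r (u+2) b)" and h4: "placed_at tbl b (e # rest)"
    by auto
  show ?thesis using h1 h3 placed_at_Cons[OF h4] by auto
qed

lemma run_to_register: "placed_at tbl u (marker_pass k u (entry_or r (u+2) b)) \<Longrightarrow> placed_at tbl (u+2) (rotation k r (u+2) b) \<Longrightarrow> length ns = r \<Longrightarrow>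
  reach (table_trans tbl) (u, 3 # ublocks ns @ w) (b, w @ [3] @ ublocks ns)"
proof -
  assume h1: "placed_at tbl u (marker_pass k u (entry_or r (u+2) b))" and h2: "placed_at tbl (u+2) (rotation k r (u+2) b)" and l: "length ns = r"
  have a: "u < length tbl" "tbl ! u = (Suc k, Rcv [(3, u+1)])" "u+1 < length tbl" "tbl ! (u+1) = (k, Snd 3 (entry_or r (u+2) b))"
    using h1 by (auto simp: marker_pass_def dest!: placed_at_Cons)
  have r1: "reach (table_trans tbl) (u, 3 # ublocks ns @ w) (u+1, ublocks ns @ w)"
    by (rule reach_recv[of u tbl _ 3 "u+1"]) (use a in auto)
  have r2: "reach (table_trans tbl) (u+1, ublocks ns @ w) (entry_or r (u+2) b, ublocks ns @ w @ [3])"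
    using reach_send[of "u+1" tbl 3 "entry_or r (u+2) b" "ublocks ns @ w"] a by auto
  have r3: "reach (table_trans tbl) (entry_or r (u+2) b, ublocks ns @ (w @ [3])) (b, (w @ [3]) @ ublocks ns)"
    by (rule rotation_run[OF h2 l])
  show ?thesis using reach_trans[OF r1 reach_trans[OF r2 r3]] by simp
qed

definition queue_code :: "nat \<Rightarrow> (nat \<Rightarrow> nat) \<Rightarrow> nat list" where
  "queue_code k s = 3 # ublocks (map s [0..<k])"

lemma ublocks_append[simp]: "ublocks (xs @ ys) = ublocks xs @ ublocks ys"
  by (simp add: ublocks_def)
lemma ublocks_Cons[simp]: "ublocks (x # ys) = ublock x @ ublocks ys"
  by (simp add: ublocks_def)
lemma ublocks_Nil[simp]: "ublocks [] = []"
  by (simp add: ublocks_def)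

lemma queue_code_split: "r < k \<Longrightarrow> queue_code k s = 3 # ublocks (map s [0..<r]) @ ublock (s r) @ ublocks (map s [Suc r..<k])"
proof -
  assume "r < k"
  then have "[0..<k] = [0..<r] @ [r..<k]" using upt_add_eq_append[of 0 r "k-r"] by simp
  also have "[r..<k] = r # [Suc r..<k]" using \<open>r < k\<close> by (simp add: upt_conv_Cons)
  finally have "[0..<k] = [0..<r] @ r # [Suc r..<k]" .
  then show ?thesis by (simp add: queue_code_def)
qed

lemma map_fun_upd_below: "map (s(r := v)) [0..<r] = map s [0..<r]" by auto
lemma map_fun_upd_above: "map (s(r := v)) [Suc r..<k] = map s [Suc r..<k]" by auto

text \<open>The gadget for register r first moves the marker and the blocks of the registers below r
  to the back; state b acts on the block of r, and rotating the remaining k - r blocks restores the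
  form queue_code. An increment sends 1 at b, which ends up in front of block r; a decrement
  receives the first letter of block r and re-sends 2 if the block was empty.\<close>
definition inc_gadget' :: "nat \<Rightarrow> nat \<Rightarrow> nat \<Rightarrow> nat \<Rightarrow> nat \<Rightarrow> entry list" where
  "inc_gadget' k r u b x = marker_pass k u (entry_or r (u+2) b) @ rotation k r (u+2) b @
     (Suc k, Snd 1 (Suc b)) # rotation k (k-r) (Suc b) x"

definition dec_gadget' :: "nat \<Rightarrow> nat \<Rightarrow> nat \<Rightarrow> nat \<Rightarrow> nat \<Rightarrow> entry list" where
  "dec_gadget' k r u b x = marker_pass k u (entry_or r (u+2) b) @ rotation k r (u+2) b @
     (Suc k, Rcv [(1, Suc b), (2, Suc b + 2)]) # rotation k (k-r) (Suc b) x"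

definition test_gadget' :: "nat \<Rightarrow> nat \<Rightarrow> nat \<Rightarrow> nat \<Rightarrow> nat \<Rightarrow> nat \<Rightarrow> entry list" where
  "test_gadget' k r u b xz xn = marker_pass k u (entry_or r (u+2) b) @ rotation k r (u+2) b @
     (Suc k, Rcv [(1, Suc b + 3*(k-r) + 1), (2, Suc b + 2)]) # rotation k (k-r) (Suc b) xz @ rotation k (k-r) (Suc b + 3*(k-r)) xn"

definition inc_gadget :: "nat \<Rightarrow> nat \<Rightarrow> nat \<Rightarrow> nat \<Rightarrow> entry list" where
  "inc_gadget k r u x = inc_gadget' k r u (u+2+3*r) x"
definition dec_gadget :: "nat \<Rightarrow> nat \<Rightarrow> nat \<Rightarrow> nat \<Rightarrow> entry list" where
  "dec_gadget k r u x = dec_gadget' k r u (u+2+3*r) x"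
definition test_gadget :: "nat \<Rightarrow> nat \<Rightarrow> nat \<Rightarrow> nat \<Rightarrow> nat \<Rightarrow> entry list" where
  "test_gadget k r u xz xn = test_gadget' k r u (u+2+3*r) xz xn"

lemma length_inc_gadget[simp]: "r < k \<Longrightarrow> length (inc_gadget k r u x) = 3 * k + 3"
  by (simp add: inc_gadget_def inc_gadget'_def marker_pass_def)
lemma length_dec_gadget[simp]: "r < k \<Longrightarrow> length (dec_gadget k r u x) = 3 * k + 3"
  by (simp add: dec_gadget_def dec_gadget'_def marker_pass_def)
lemma length_test_gadget[simp]: "length (test_gadget k r u xz xn) = 3 + 3 * r + 6 * (k - r)"
  by (simp add: test_gadget_def test_gadget'_def marker_pass_def)

lemma queue_code_update_split: "r < k \<Longrightarrow> queue_code k (s(r := v)) = 3 # ublocks (map s [0..<r]) @ ublock v @ ublocks (map s [Suc r..<k])"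
  using queue_code_split[of r k "s(r := v)"] by (simp add: map_fun_upd_below map_fun_upd_above)

lemma ublock_Suc: "ublock (Suc v) = 1 # ublock v" by (simp add: ublock_def)
lemma ublock_0: "ublock 0 = [2]" by (simp add: ublock_def)

lemma run_inc_gadget': "placed_at tbl u (inc_gadget' k r u b x) \<Longrightarrow> b = u+2+3*r \<Longrightarrow> r < k \<Longrightarrow> reach (table_trans tbl) (u, queue_code k s) (x, queue_code k (s(r := Suc (s r))))"
proof -
  assume h: "placed_at tbl u (inc_gadget' k r u b x)" and bb: "b = u+2+3*r" and rk: "r < k"
  note a = placed_at_gadget[OF h[unfolded inc_gadget'_def] bb]
  define B1 where "B1 = ublocks (map s [0..<r])"
  define B2 where "B2 = ublocks (map s [Suc r..<k])"
  define v where "v = s r"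
  have r1: "reach (table_trans tbl) (u, 3 # B1 @ ublock v @ B2) (b, ublock v @ B2 @ 3 # B1)"
    using run_to_register[of tbl u k r b "map s [0..<r]" "ublock v @ B2"] a unfolding B1_def by simp
  have r2: "reach (table_trans tbl) (b, ublock v @ B2 @ 3 # B1) (Suc b, ublock v @ B2 @ 3 # B1 @ [1])"
    using reach_send[of b tbl 1 "Suc b" "ublock v @ B2 @ 3 # B1"] a by simp
  have r3: "reach (table_trans tbl) (Suc b, ublock v @ B2 @ 3 # B1 @ [1]) (x, 3 # B1 @ 1 # ublock v @ B2)"
    using rotation_run[of tbl "Suc b" k "k-r" x "v # map s [Suc r..<k]" "3 # B1 @ [1]"] a rk
    unfolding B2_def by (simp add: entry_or_def)
  have "reach (table_trans tbl) (u, 3 # B1 @ ublock v @ B2) (x, 3 # B1 @ 1 # ublock v @ B2)"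
    using reach_trans[OF r1 reach_trans[OF r2 r3]] .
  then show ?thesis using queue_code_split[OF rk, of s] queue_code_update_split[OF rk, of s "Suc (s r)"]
    unfolding B1_def B2_def v_def by (simp add: ublock_Suc)
qed

lemma run_dec_gadget': "placed_at tbl u (dec_gadget' k r u b x) \<Longrightarrow> b = u+2+3*r \<Longrightarrow> r < k \<Longrightarrow> reach (table_trans tbl) (u, queue_code k s) (x, queue_code k (s(r := s r - 1)))"
proof -
  assume h: "placed_at tbl u (dec_gadget' k r u b x)" and bb: "b = u+2+3*r" and rk: "r < k"
  note a = placed_at_gadget[OF h[unfolded dec_gadget'_def] bb]
  define B1 where "B1 = ublocks (map s [0..<r])"
  define B2 where "B2 = ublocks (map s [Suc r..<k])"
  define v where "v = s r"
  have r1: "reach (table_trans tbl) (u, 3 # B1 @ ublock v @ B2) (b, ublock v @ B2 @ 3 # B1)"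
    using run_to_register[of tbl u k r b "map s [0..<r]" "ublock v @ B2"] a unfolding B1_def by simp
  have kr: "k - r = Suc (k - Suc r)" using rk by simp
  have ac: "placed_at tbl (Suc b) (rotation k (Suc (k - Suc r)) (Suc b) x)" using a kr by simp
  show ?thesis
  proof (cases v)
    case 0
    have r2: "reach (table_trans tbl) (b, ublock v @ B2 @ 3 # B1) (Suc b + 2, B2 @ 3 # B1)"
      using reach_recv[of b tbl _ 2 "Suc b + 2" "B2 @ 3 # B1"] a 0 by (simp add: ublock_0)
    have r3: "reach (table_trans tbl) (Suc b + 2, B2 @ 3 # B1) (entry_or (k - Suc r) (Suc b + 3) x, B2 @ 3 # B1 @ [2])"
      using rotation_run_append_sep[OF ac, of "B2 @ 3 # B1"] by simp
    have r4: "reach (table_trans tbl) (entry_or (k - Suc r) (Suc b + 3) x, B2 @ 3 # B1 @ [2]) (x, 3 # B1 @ 2 # B2)"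
      using rotation_run[of tbl "Suc b + 3" k "k - Suc r" x "map s [Suc r..<k]" "3 # B1 @ [2]"] placed_at_rotation[OF ac]
      unfolding B2_def by simp
    have "reach (table_trans tbl) (u, 3 # B1 @ ublock v @ B2) (x, 3 # B1 @ 2 # B2)"
      using reach_trans[OF r1 reach_trans[OF r2 reach_trans[OF r3 r4]]] .
    then show ?thesis using queue_code_split[OF rk, of s] queue_code_update_split[OF rk, of s "s r - 1"] 0
      unfolding B1_def B2_def v_def by (simp add: ublock_0)
  next
    case (Suc w)
    have r2: "reach (table_trans tbl) (b, ublock v @ B2 @ 3 # B1) (Suc b, ublock w @ B2 @ 3 # B1)"
      using reach_recv[of b tbl _ 1 "Suc b" "ublock w @ B2 @ 3 # B1"] a Suc by (simp add: ublock_Suc)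
    have r3: "reach (table_trans tbl) (Suc b, ublock w @ B2 @ 3 # B1) (x, 3 # B1 @ ublock w @ B2)"
      using rotation_run[of tbl "Suc b" k "k-r" x "w # map s [Suc r..<k]" "3 # B1"] a rk
      unfolding B2_def by (simp add: entry_or_def)
    have "reach (table_trans tbl) (u, 3 # B1 @ ublock v @ B2) (x, 3 # B1 @ ublock w @ B2)"
      using reach_trans[OF r1 reach_trans[OF r2 r3]] .
    then show ?thesis using queue_code_split[OF rk, of s] queue_code_update_split[OF rk, of s "s r - 1"] Suc
      unfolding B1_def B2_def v_def by simp
  qed
qed

lemma run_test_gadget': "placed_at tbl u (test_gadget' k r u b xz xn) \<Longrightarrow> b = u+2+3*r \<Longrightarrow> r < k \<Longrightarrow>
   reach (table_trans tbl) (u, queue_code k s) (if s r = 0 then xz else xn, queue_code k s)"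
proof -
  assume h: "placed_at tbl u (test_gadget' k r u b xz xn)" and bb: "b = u+2+3*r" and rk: "r < k"
  note a = placed_at_gadget[OF h[unfolded test_gadget'_def] bb]
  define B1 where "B1 = ublocks (map s [0..<r])"
  define B2 where "B2 = ublocks (map s [Suc r..<k])"
  define v where "v = s r"
  have r1: "reach (table_trans tbl) (u, 3 # B1 @ ublock v @ B2) (b, ublock v @ B2 @ 3 # B1)"
    using run_to_register[of tbl u k r b "map s [0..<r]" "ublock v @ B2"] a unfolding B1_def by simp
  have kr: "k - r = Suc (k - Suc r)" using rk by simp
  have a2: "placed_at tbl (Suc b) (rotation k (k-r) (Suc b) xz)" "placed_at tbl (Suc b + 3*(k-r)) (rotation k (k-r) (Suc b + 3*(k-r)) xn)"
    using placed_at_append[of tbl "Suc b" "rotation k (k-r) (Suc b) xz"] a by auto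
  have acz: "placed_at tbl (Suc b) (rotation k (Suc (k - Suc r)) (Suc b) xz)" using a2 kr by simp
  have acn: "placed_at tbl (Suc b + 3*(k-r)) (rotation k (Suc (k - Suc r)) (Suc b + 3*(k-r)) xn)" using a2 kr by simp
  have q: "queue_code k s = 3 # B1 @ ublock v @ B2" using queue_code_split[OF rk, of s] unfolding B1_def B2_def v_def .
  show ?thesis
  proof (cases v)
    case 0
    have r2: "reach (table_trans tbl) (b, ublock v @ B2 @ 3 # B1) (Suc b + 2, B2 @ 3 # B1)"
      using reach_recv[of b tbl _ 2 "Suc b + 2" "B2 @ 3 # B1"] a 0 by (simp add: ublock_0)
    have r3: "reach (table_trans tbl) (Suc b + 2, B2 @ 3 # B1) (entry_or (k - Suc r) (Suc b + 3) xz, B2 @ 3 # B1 @ [2])"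
      using rotation_run_append_sep[OF acz, of "B2 @ 3 # B1"] by simp
    have r4: "reach (table_trans tbl) (entry_or (k - Suc r) (Suc b + 3) xz, B2 @ 3 # B1 @ [2]) (xz, 3 # B1 @ 2 # B2)"
      using rotation_run[of tbl "Suc b + 3" k "k - Suc r" xz "map s [Suc r..<k]" "3 # B1 @ [2]"] placed_at_rotation[OF acz]
      unfolding B2_def by simp
    have "reach (table_trans tbl) (u, 3 # B1 @ ublock v @ B2) (xz, 3 # B1 @ 2 # B2)"
      using reach_trans[OF r1 reach_trans[OF r2 reach_trans[OF r3 r4]]] .
    then show ?thesis using q 0 unfolding v_def by (simp add: ublock_0)
  next
    case (Suc w)
    have r2: "reach (table_trans tbl) (b, ublock v @ B2 @ 3 # B1) (Suc b + 3*(k-r) + 1, ublock w @ B2 @ 3 # B1)"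
      using reach_recv[of b tbl _ 1 "Suc b + 3*(k-r) + 1" "ublock w @ B2 @ 3 # B1"] a Suc by (simp add: ublock_Suc)
    have r3: "reach (table_trans tbl) (Suc b + 3*(k-r) + 1, ublock w @ B2 @ 3 # B1) (entry_or (k - Suc r) (Suc b + 3*(k-r) + 3) xn, B2 @ 3 # B1 @ ublock v)"
      using rotation_run_append_one[OF acn, of w "B2 @ 3 # B1"] Suc by simp
    have r4: "reach (table_trans tbl) (entry_or (k - Suc r) (Suc b + 3*(k-r) + 3) xn, B2 @ 3 # B1 @ ublock v) (xn, 3 # B1 @ ublock v @ B2)"
      using rotation_run[of tbl "Suc b + 3*(k-r) + 3" k "k - Suc r" xn "map s [Suc r..<k]" "3 # B1 @ ublock v"] placed_at_rotation[OF acn]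
      unfolding B2_def by simp
    have "reach (table_trans tbl) (u, 3 # B1 @ ublock v @ B2) (xn, 3 # B1 @ ublock v @ B2)"
      using reach_trans[OF r1 reach_trans[OF r2 reach_trans[OF r3 r4]]] .
    then show ?thesis using q Suc unfolding v_def by simp
  qed
qed

lemma run_inc_gadget: "placed_at tbl u (inc_gadget k r u x) \<Longrightarrow> r < k \<Longrightarrow> reach (table_trans tbl) (u, queue_code k s) (x, queue_code k (s(r := Suc (s r))))"
  unfolding inc_gadget_def using run_inc_gadget' by blast
lemma run_dec_gadget: "placed_at tbl u (dec_gadget k r u x) \<Longrightarrow> r < k \<Longrightarrow> reach (table_trans tbl) (u, queue_code k s) (x, queue_code k (s(r := s r - 1)))"
  unfolding dec_gadget_def using run_dec_gadget' by blast
lemma run_test_gadget: "placed_at tbl u (test_gadget k r u xz xn) \<Longrightarrow> r < k \<Longrightarrow>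
   reach (table_trans tbl) (u, queue_code k s) (if s r = 0 then xz else xn, queue_code k s)"
  unfolding test_gadget_def using run_test_gadget' by blast

section \<open>Deterministic FIFO automata\<close>

definition deterministic :: "trans list \<Rightarrow> bool" where
  "deterministic \<Delta> \<longleftrightarrow> (\<forall>q \<alpha>1 q1 \<alpha>2 q2. (q, \<alpha>1, q1) \<in> set \<Delta> \<longrightarrow> (q, \<alpha>2, q2) \<in> set \<Delta> \<longrightarrow>
     (\<alpha>1 = \<alpha>2 \<and> q1 = q2) \<or> (\<exists>a b. \<alpha>1 = Recv a \<and> \<alpha>2 = Recv b \<and> a \<noteq> b))"

lemma deterministic_append:
  assumes "deterministic \<Delta>1" "deterministic \<Delta>2" and "fst ` set \<Delta>1 \<inter> fst ` set \<Delta>2 = {}"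
  shows "deterministic (\<Delta>1 @ \<Delta>2)"
  using assms unfolding deterministic_def by (auto; metis fst_conv disjoint_iff image_eqI)

lemma deterministic_map_states:
  assumes "inj f" "deterministic \<Delta>"
  shows "deterministic (map (\<lambda>(q, \<alpha>, q'). (f q, \<alpha>, f q')) \<Delta>)"
  using assms unfolding deterministic_def inj_def by fastforce

lemma deterministic_if_source_inj:
  assumes "\<And>t t'. t \<in> set \<Delta> \<Longrightarrow> t' \<in> set \<Delta> \<Longrightarrow> fst t = fst t' \<Longrightarrow> t = t'"
  shows "deterministic \<Delta>"
  using assms unfolding deterministic_def by fastforce

lemma step_deterministic:
  assumes "deterministic \<Delta>" "step \<Delta> c \<alpha>1 c1" "step \<Delta> c \<alpha>2 c2"
  shows "\<alpha>1 = \<alpha>2 \<and> c1 = c2"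
proof -
  obtain q w q1 w1 q2 w2 where c: "c = (q, w)" "c1 = (q1, w1)" "c2 = (q2, w2)"
    by (metis prod.exhaust)
  have "(q, \<alpha>1, q1) \<in> set \<Delta>" "(q, \<alpha>2, q2) \<in> set \<Delta>"
    using assms(2,3) c by (cases \<alpha>1; cases \<alpha>2; auto)+
  then have "(\<alpha>1 = \<alpha>2 \<and> q1 = q2) \<or> (\<exists>a b. \<alpha>1 = Recv a \<and> \<alpha>2 = Recv b \<and> a \<noteq> b)"
    using assms(1) unfolding deterministic_def by blast
  then show ?thesis using assms(2,3) c by (cases \<alpha>1) auto
qed

lemma run_prefix_of_stuck_run:
  assumes "deterministic \<Delta>" and "steps \<Delta> c \<rho> ce" and "\<And>\<alpha> c''. \<not> step \<Delta> ce \<alpha> c''"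
  shows "steps \<Delta> c \<tau> c' \<Longrightarrow> \<exists>\<rho>'. \<rho> = \<tau> @ \<rho>'"
  using assms(2)
proof (induction \<tau> arbitrary: c \<rho>)
  case Nil then show ?case by auto
next
  case (Cons \<alpha> \<tau>)
  then obtain c1 where c1: "step \<Delta> c \<alpha> c1" "steps \<Delta> c1 \<tau> c'" by auto
  show ?case
  proof (cases \<rho>)
    case Nil then show ?thesis using Cons.prems c1 assms(3) by auto
  next
    case (Cons \<beta> \<rho>1)
    then obtain c2 where c2: "step \<Delta> c \<beta> c2" "steps \<Delta> c2 \<rho>1 ce" using Cons.prems by auto
    have "\<alpha> = \<beta> \<and> c1 = c2" using step_deterministic[OF assms(1) c1(1) c2(1)] .
    then show ?thesis using Cons.IH[OF c1(2)] c2 Cons by auto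
  qed
qed

lemma deterministic_table_trans:
  assumes "\<And>i l. i < length tbl \<Longrightarrow> snd (tbl ! i) = Rcv l \<Longrightarrow> distinct (map fst l)"
  shows "deterministic (table_trans tbl)"
  unfolding deterministic_def
proof (intro allI impI)
  fix i \<alpha>1 p1 \<alpha>2 p2
  assume h: "(i, \<alpha>1, p1) \<in> set (table_trans tbl)" "(i, \<alpha>2, p2) \<in> set (table_trans tbl)"
  then have i: "i < length tbl" by (simp add: mem_table_trans)
  show "(\<alpha>1 = \<alpha>2 \<and> p1 = p2) \<or> (\<exists>a b. \<alpha>1 = Recv a \<and> \<alpha>2 = Recv b \<and> a \<noteq> b)"
  proof (cases "snd (tbl ! i)")
    case Snd then show ?thesis using h by (auto simp: mem_table_trans)
  next
    case (Rcv l)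
    then show ?thesis using h assms[OF i Rcv] eq_key_imp_eq_value by (fastforce simp: mem_table_trans)
  qed
qed

section \<open>Compiling counter programs into transition tables\<close>

fun code_length :: "nat \<Rightarrow> cmd \<Rightarrow> nat" where
  "code_length k Skip = 0"
| "code_length k (Inc r) = 3 * k + 3"
| "code_length k (Dec r) = 3 * k + 3"
| "code_length k (Seq c1 c2) = code_length k c1 + code_length k c2"
| "code_length k (While r c) = 3 + 3 * r + 6 * (k - r) + code_length k c"

fun code_entry :: "nat \<Rightarrow> cmd \<Rightarrow> nat \<Rightarrow> nat \<Rightarrow> nat" where
  "code_entry k Skip u x = x"
| "code_entry k (Inc r) u x = u"
| "code_entry k (Dec r) u x = u"
| "code_entry k (Seq c1 c2) u x = code_entry k c1 u (code_entry k c2 (u + code_length k c1) x)"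
| "code_entry k (While r c) u x = u"

fun compile_cmd :: "nat \<Rightarrow> cmd \<Rightarrow> nat \<Rightarrow> nat \<Rightarrow> entry list" where
  "compile_cmd k Skip u x = []"
| "compile_cmd k (Inc r) u x = inc_gadget k r u x"
| "compile_cmd k (Dec r) u x = dec_gadget k r u x"
| "compile_cmd k (Seq c1 c2) u x = compile_cmd k c1 u (code_entry k c2 (u + code_length k c1) x) @ compile_cmd k c2 (u + code_length k c1) x"
| "compile_cmd k (While r c) u x = test_gadget k r u x (code_entry k c (u + (3 + 3 * r + 6 * (k - r))) u)
     @ compile_cmd k c (u + (3 + 3 * r + 6 * (k - r))) u"

fun regs_below :: "nat \<Rightarrow> cmd \<Rightarrow> bool" where
  "regs_below k Skip = True"
| "regs_below k (Inc r) = (r < k)"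
| "regs_below k (Dec r) = (r < k)"
| "regs_below k (Seq c1 c2) = (regs_below k c1 \<and> regs_below k c2)"
| "regs_below k (While r c) = (r < k \<and> regs_below k c)"

lemma length_compile_cmd: "regs_below k c \<Longrightarrow> length (compile_cmd k c u x) = code_length k c"
  by (induction c arbitrary: u x) auto

lemma compile_cmd_simulates: "exec c s s' \<Longrightarrow> regs_below k c \<Longrightarrow> placed_at tbl u (compile_cmd k c u x) \<Longrightarrow>
   reach (table_trans tbl) (code_entry k c u x, queue_code k s) (x, queue_code k s')"
proof (induction arbitrary: u x rule: exec.induct)
  case (ex_Skip s) then show ?case by (auto intro: reach_refl)
next
  case (ex_Inc r s) then show ?case using run_inc_gadget[of tbl u k r x s] unfolding fun_upd_def by simp
next
  case (ex_Dec r s) then show ?case using run_dec_gadget[of tbl u k r x s] unfolding fun_upd_def by simp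
next
  case (ex_Seq c1 s s1 c2 s2)
  have a: "placed_at tbl u (compile_cmd k c1 u (code_entry k c2 (u + code_length k c1) x))" "placed_at tbl (u + code_length k c1) (compile_cmd k c2 (u + code_length k c1) x)"
    using placed_at_append[of tbl u "compile_cmd k c1 u (code_entry k c2 (u + code_length k c1) x)" "compile_cmd k c2 (u + code_length k c1) x"]
      ex_Seq.prems length_compile_cmd[of k c1 u "code_entry k c2 (u + code_length k c1) x"] by auto
  show ?case using reach_trans[OF ex_Seq.IH(1)[OF _ a(1)] ex_Seq.IH(2)[OF _ a(2)]] ex_Seq.prems by auto
next
  case (ex_W0 s r c)
  have "placed_at tbl u (test_gadget k r u x (code_entry k c (u + (3 + 3 * r + 6 * (k - r))) u))"
    using placed_at_append[of tbl u] ex_W0.prems by auto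
  then show ?case using run_test_gadget[of tbl u k r x _ s] ex_W0 by auto
next
  case (ex_W1 s r c s1 s2)
  let ?L = "3 + 3 * r + 6 * (k - r)"
  have a: "placed_at tbl u (test_gadget k r u x (code_entry k c (u + ?L) u))" "placed_at tbl (u + ?L) (compile_cmd k c (u + ?L) u)"
    using placed_at_append[of tbl u "test_gadget k r u x (code_entry k c (u + ?L) u)"] ex_W1.prems by auto
  have r1: "reach (table_trans tbl) (u, queue_code k s) (code_entry k c (u + ?L) u, queue_code k s)"
    using run_test_gadget[OF a(1), of s] ex_W1 by auto
  have r2: "reach (table_trans tbl) (code_entry k c (u + ?L) u, queue_code k s) (u, queue_code k s1)"
    using ex_W1.IH(1)[OF _ a(2)] ex_W1.prems by auto
  have r3: "reach (table_trans tbl) (u, queue_code k s1) (x, queue_code k s2)"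
    using ex_W1.IH(2)[of u x] ex_W1.prems by auto
  show ?case using reach_trans[OF r1 reach_trans[OF r2 r3]] by simp
qed

section \<open>Well-formed transition tables\<close>

definition marker_weight :: "nat \<Rightarrow> nat" where "marker_weight a = (if a = 2 \<or> a = 3 then 1 else 0)"

definition wf_state :: "entry list \<Rightarrow> nat \<Rightarrow> bool" where
  "wf_state tbl i \<longleftrightarrow> 1 \<le> fst (tbl ! i) \<and> (case snd (tbl ! i) of
      Snd a q \<Rightarrow> q < length tbl \<and> fst (tbl ! q) = fst (tbl ! i) + marker_weight a
    | Rcv l \<Rightarrow> distinct (map fst l) \<and> (\<forall>(a, q)\<in>set l. q < length tbl \<and> fst (tbl ! q) + marker_weight a = fst (tbl ! i)))"

definition wf_segment :: "entry list \<Rightarrow> nat \<Rightarrow> entry list \<Rightarrow> bool" where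
  "wf_segment tbl u f \<longleftrightarrow> (\<forall>i<length f. wf_state tbl (u + i))"

lemma wf_segment_Nil[simp]: "wf_segment tbl u []" by (simp add: wf_segment_def)

lemma wf_segment_append: "wf_segment tbl u f1 \<Longrightarrow> wf_segment tbl (u + length f1) f2 \<Longrightarrow> wf_segment tbl u (f1 @ f2)"
  unfolding wf_segment_def
proof (intro allI impI)
  fix i assume h1: "\<forall>i<length f1. wf_state tbl (u + i)" and h2: "\<forall>i<length f2. wf_state tbl (u + length f1 + i)"
    and i: "i < length (f1 @ f2)"
  show "wf_state tbl (u + i)"
  proof (cases "i < length f1")
    case True then show ?thesis using h1 by auto
  next
    case False
    then have "u + i = u + length f1 + (i - length f1)" by simp
    then show ?thesis using h2 i False by (metis add_diff_inverse_nat length_append nat_add_left_cancel_less)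
  qed
qed

lemma wf_segment_Cons: "wf_state tbl u \<Longrightarrow> wf_segment tbl (Suc u) f \<Longrightarrow> wf_segment tbl u (e # f)"
  unfolding wf_segment_def
proof (intro allI impI)
  fix i assume h1: "wf_state tbl u" and h2: "\<forall>i<length f. wf_state tbl (Suc u + i)" and i: "i < length (e # f)"
  show "wf_state tbl (u + i)" using h1 h2 i by (cases i) auto
qed

lemma wf_state_send: "tbl ! q0 = (p, Snd a q) \<Longrightarrow> 1 \<le> p \<Longrightarrow> q < length tbl \<Longrightarrow> fst (tbl ! q) = p + marker_weight a \<Longrightarrow> wf_state tbl q0"
  by (simp add: wf_state_def)

lemma wf_state_recv: "tbl ! q0 = (p, Rcv l) \<Longrightarrow> 1 \<le> p \<Longrightarrow> distinct (map fst l) \<Longrightarrow>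
   (\<forall>(a, q)\<in>set l. q < length tbl \<and> fst (tbl ! q) + marker_weight a = p) \<Longrightarrow> wf_state tbl q0"
  by (simp add: wf_state_def)

lemma wf_rotation: "placed_at tbl u (rotation k n u tgt) \<Longrightarrow> 1 \<le> k \<Longrightarrow> (0 < n \<longrightarrow> tgt < length tbl \<and> fst (tbl ! tgt) = Suc k) \<Longrightarrow>
   wf_segment tbl u (rotation k n u tgt) \<and> (0 < n \<longrightarrow> entry_or n u tgt < length tbl \<and> fst (tbl ! entry_or n u tgt) = Suc k)"
proof (induction n arbitrary: u)
  case 0 then show ?case by simp
next
  case (Suc n)
  note a = placed_at_rotation[OF Suc.prems(1)]
  have ih: "wf_segment tbl (u+3) (rotation k n (u+3) tgt) \<and> (0 < n \<longrightarrow> entry_or n (u+3) tgt < length tbl \<and> fst (tbl ! entry_or n (u+3) tgt) = Suc k)"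
    using Suc.IH[of "u+3"] a Suc.prems by auto
  have nx: "entry_or n (u+3) tgt < length tbl \<and> fst (tbl ! entry_or n (u+3) tgt) = Suc k"
    using ih Suc.prems by (cases n) (auto simp: entry_or_def)
  have w0: "wf_state tbl u" by (rule wf_state_recv[of _ _ "Suc k"]) (use a in \<open>auto simp: marker_weight_def\<close>)
  have w1: "wf_state tbl (Suc u)" by (rule wf_state_send[of _ _ "Suc k" 1 u]) (use a in \<open>auto simp: marker_weight_def\<close>)
  have w2: "wf_state tbl (Suc (Suc u))" by (rule wf_state_send[of _ _ k 2 "entry_or n (u+3) tgt"]) (use a nx Suc.prems in \<open>auto simp: marker_weight_def\<close>)
  have "wf_segment tbl u (rotation k (Suc n) u tgt)"
    using w0 w1 w2 ih by (auto intro!: wf_segment_Cons simp: numeral_3_eq_3)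
  then show ?case using a by (simp add: entry_or_def)
qed

lemma wf_gadget_prefix: "placed_at tbl u (marker_pass k u (entry_or r (u+2) b) @ rotation k r (u+2) b @ e # rest) \<Longrightarrow> b = u+2+3*r \<Longrightarrow> 1 \<le> k \<Longrightarrow>
   fst e = Suc k \<Longrightarrow> wf_segment tbl u (marker_pass k u (entry_or r (u+2) b) @ rotation k r (u+2) b) \<and> u < length tbl \<and> fst (tbl ! u) = Suc k"
proof -
  assume h: "placed_at tbl u (marker_pass k u (entry_or r (u+2) b) @ rotation k r (u+2) b @ e # rest)" and bb: "b = u+2+3*r"
    and k: "1 \<le> k" and e: "fst e = Suc k"
  note a = placed_at_gadget[OF h bb]
  have hd: "u < length tbl" "tbl ! u = (Suc k, Rcv [(3, u+1)])" "u+1 < length tbl" "tbl ! (u+1) = (k, Snd 3 (entry_or r (u+2) b))"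
    using a by (auto simp: marker_pass_def dest!: placed_at_Cons)
  have c: "wf_segment tbl (u+2) (rotation k r (u+2) b) \<and> (0 < r \<longrightarrow> entry_or r (u+2) b < length tbl \<and> fst (tbl ! entry_or r (u+2) b) = Suc k)"
    by (rule wf_rotation) (use a e k in auto)
  have t: "entry_or r (u+2) b < length tbl \<and> fst (tbl ! entry_or r (u+2) b) = Suc k"
    using c a e by (cases r) (auto simp: entry_or_def)
  have w0: "wf_state tbl u" by (rule wf_state_recv[OF hd(2)]) (use hd in \<open>auto simp: marker_weight_def\<close>)
  have w1: "wf_state tbl (u+1)" by (rule wf_state_send[OF hd(4)]) (use k t in \<open>auto simp: marker_weight_def\<close>)
  have hw: "wf_segment tbl u (marker_pass k u (entry_or r (u+2) b))" unfolding marker_pass_def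
    by (rule wf_segment_Cons[OF w0], rule wf_segment_Cons) (use w1 in simp_all)
  have l: "u + length (marker_pass k u (entry_or r (u+2) b)) = u + 2" by (simp add: marker_pass_def)
  have "wf_segment tbl (u + length (marker_pass k u (entry_or r (u+2) b))) (rotation k r (u+2) b)" unfolding l using c by blast
  then have "wf_segment tbl u (marker_pass k u (entry_or r (u+2) b) @ rotation k r (u+2) b)" by (rule wf_segment_append[OF hw])
  then show ?thesis using hd by simp
qed

lemma rotation_entry_weights: "placed_at tbl u (rotation k (Suc n) u tgt) \<Longrightarrow> fst (tbl ! u) = Suc k \<and> fst (tbl ! (u+1)) = Suc k \<and> fst (tbl ! (u+2)) = k
   \<and> u + 2 < length tbl"
proof -
  assume "placed_at tbl u (rotation k (Suc n) u tgt)"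
  from placed_at_rotation[OF this] show ?thesis by simp
qed

lemma wf_gadget:
  assumes h: "placed_at tbl u (marker_pass k u (entry_or r (u+2) b) @ rotation k r (u+2) b @ e # rest)" and bb: "b = u+2+3*r" and k: "1 \<le> k"
    and e: "fst e = Suc k" and we: "wf_state tbl b" and wr: "wf_segment tbl (Suc b) rest"
  shows "wf_segment tbl u (marker_pass k u (entry_or r (u+2) b) @ rotation k r (u+2) b @ e # rest) \<and> u < length tbl \<and> fst (tbl ! u) = Suc k"
proof -
  note p = wf_gadget_prefix[OF h bb k e]
  have l: "u + length (marker_pass k u (entry_or r (u+2) b) @ rotation k r (u+2) b) = b" using bb by (simp add: marker_pass_def)
  have "wf_segment tbl b (e # rest)" by (rule wf_segment_Cons[OF we wr])
  then have "wf_segment tbl (u + length (marker_pass k u (entry_or r (u+2) b) @ rotation k r (u+2) b)) (e # rest)"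
    by (simp only: l)
  then show ?thesis using p wf_segment_append[of tbl u "marker_pass k u (entry_or r (u+2) b) @ rotation k r (u+2) b" "e # rest"] by simp
qed

lemma wf_inc_gadget: "placed_at tbl u (inc_gadget k r u x) \<Longrightarrow> r < k \<Longrightarrow> 1 \<le> k \<Longrightarrow> x < length tbl \<Longrightarrow> fst (tbl ! x) = Suc k \<Longrightarrow>
   wf_segment tbl u (inc_gadget k r u x) \<and> u < length tbl \<and> fst (tbl ! u) = Suc k"
proof -
  assume h0: "placed_at tbl u (inc_gadget k r u x)" and rk: "r < k" and k: "1 \<le> k" and x: "x < length tbl" "fst (tbl ! x) = Suc k"
  define b where "b = u+2+3*r"
  have h: "placed_at tbl u (inc_gadget' k r u b x)" using h0 by (simp add: inc_gadget_def b_def)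
  note a = placed_at_gadget[OF h[unfolded inc_gadget'_def] b_def]
  have kr: "k - r = Suc (k - Suc r)" using rk by simp
  have ac: "placed_at tbl (Suc b) (rotation k (Suc (k - Suc r)) (Suc b) x)" using a kr by simp
  note ce = rotation_entry_weights[OF ac]
  have wr: "wf_segment tbl (Suc b) (rotation k (k - r) (Suc b) x)" using wf_rotation[of tbl "Suc b" k "k-r" x] a k x by auto
  have we: "wf_state tbl b" by (rule wf_state_send[of _ _ "Suc k" 1 "Suc b"]) (use a ce in \<open>auto simp: marker_weight_def\<close>)
  show ?thesis using wf_gadget[OF h[unfolded inc_gadget'_def] b_def k _ we wr] by (simp add: inc_gadget_def inc_gadget'_def b_def)
qed

lemma wf_dec_gadget: "placed_at tbl u (dec_gadget k r u x) \<Longrightarrow> r < k \<Longrightarrow> 1 \<le> k \<Longrightarrow> x < length tbl \<Longrightarrow> fst (tbl ! x) = Suc k \<Longrightarrow>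
   wf_segment tbl u (dec_gadget k r u x) \<and> u < length tbl \<and> fst (tbl ! u) = Suc k"
proof -
  assume h0: "placed_at tbl u (dec_gadget k r u x)" and rk: "r < k" and k: "1 \<le> k" and x: "x < length tbl" "fst (tbl ! x) = Suc k"
  define b where "b = u+2+3*r"
  have h: "placed_at tbl u (dec_gadget' k r u b x)" using h0 by (simp add: dec_gadget_def b_def)
  note a = placed_at_gadget[OF h[unfolded dec_gadget'_def] b_def]
  have kr: "k - r = Suc (k - Suc r)" using rk by simp
  have ac: "placed_at tbl (Suc b) (rotation k (Suc (k - Suc r)) (Suc b) x)" using a kr by simp
  note ce = rotation_entry_weights[OF ac]
  have wr: "wf_segment tbl (Suc b) (rotation k (k - r) (Suc b) x)" using wf_rotation[of tbl "Suc b" k "k-r" x] a k x by auto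
  have we: "wf_state tbl b" by (rule wf_state_recv[of _ _ "Suc k"]) (use a ce in \<open>auto simp: marker_weight_def\<close>)
  show ?thesis using wf_gadget[OF h[unfolded dec_gadget'_def] b_def k _ we wr] by (simp add: dec_gadget_def dec_gadget'_def b_def)
qed

lemma wf_test_gadget: "placed_at tbl u (test_gadget k r u xz xn) \<Longrightarrow> r < k \<Longrightarrow> 1 \<le> k \<Longrightarrow> xz < length tbl \<Longrightarrow> fst (tbl ! xz) = Suc k \<Longrightarrow>
   xn < length tbl \<Longrightarrow> fst (tbl ! xn) = Suc k \<Longrightarrow>
   wf_segment tbl u (test_gadget k r u xz xn) \<and> u < length tbl \<and> fst (tbl ! u) = Suc k"
proof -
  assume h0: "placed_at tbl u (test_gadget k r u xz xn)" and rk: "r < k" and k: "1 \<le> k" and x: "xz < length tbl" "fst (tbl ! xz) = Suc k"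
     "xn < length tbl" "fst (tbl ! xn) = Suc k"
  define b where "b = u+2+3*r"
  have h: "placed_at tbl u (test_gadget' k r u b xz xn)" using h0 by (simp add: test_gadget_def b_def)
  note a = placed_at_gadget[OF h[unfolded test_gadget'_def] b_def]
  have kr: "k - r = Suc (k - Suc r)" using rk by simp
  have a2: "placed_at tbl (Suc b) (rotation k (k-r) (Suc b) xz)" "placed_at tbl (Suc b + 3*(k-r)) (rotation k (k-r) (Suc b + 3*(k-r)) xn)"
    using placed_at_append[of tbl "Suc b" "rotation k (k-r) (Suc b) xz"] a by auto
  have acz: "placed_at tbl (Suc b) (rotation k (Suc (k - Suc r)) (Suc b) xz)" using a2 kr by simp
  have acn: "placed_at tbl (Suc b + 3*(k-r)) (rotation k (Suc (k - Suc r)) (Suc b + 3*(k-r)) xn)" using a2 kr by simp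
  note cz = rotation_entry_weights[OF acz] and cn = rotation_entry_weights[OF acn]
  have wr1: "wf_segment tbl (Suc b) (rotation k (k - r) (Suc b) xz)" using wf_rotation[OF a2(1)] k x by auto
  have wr2: "wf_segment tbl (Suc b + 3*(k-r)) (rotation k (k - r) (Suc b + 3*(k-r)) xn)" using wf_rotation[OF a2(2)] k x by auto
  have wr: "wf_segment tbl (Suc b) (rotation k (k - r) (Suc b) xz @ rotation k (k - r) (Suc b + 3*(k-r)) xn)"
    using wf_segment_append[OF wr1] wr2 by simp
  have we: "wf_state tbl b" by (rule wf_state_recv[of _ _ "Suc k"]) (use a cz cn in \<open>auto simp: marker_weight_def\<close>)
  show ?thesis using wf_gadget[OF h[unfolded test_gadget'_def] b_def k _ we wr] by (simp add: test_gadget_def test_gadget'_def b_def)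
qed

lemma wf_compile_cmd: "regs_below k c \<Longrightarrow> 1 \<le> k \<Longrightarrow> placed_at tbl u (compile_cmd k c u x) \<Longrightarrow> x < length tbl \<Longrightarrow> fst (tbl ! x) = Suc k \<Longrightarrow>
   wf_segment tbl u (compile_cmd k c u x) \<and> code_entry k c u x < length tbl \<and> fst (tbl ! code_entry k c u x) = Suc k"
proof (induction c arbitrary: u x)
  case Skip then show ?case by simp
next
  case (Inc r) then show ?case using wf_inc_gadget[of tbl u k r x] by simp
next
  case (Dec r) then show ?case using wf_dec_gadget[of tbl u k r x] by simp
next
  case (Seq c1 c2)
  let ?x1 = "code_entry k c2 (u + code_length k c1) x"
  have a: "placed_at tbl u (compile_cmd k c1 u ?x1)" "placed_at tbl (u + code_length k c1) (compile_cmd k c2 (u + code_length k c1) x)"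
    using placed_at_append[of tbl u "compile_cmd k c1 u ?x1" "compile_cmd k c2 (u + code_length k c1) x"]
      Seq.prems length_compile_cmd[of k c1 u ?x1] by auto
  have i2: "wf_segment tbl (u + code_length k c1) (compile_cmd k c2 (u + code_length k c1) x) \<and> ?x1 < length tbl \<and> fst (tbl ! ?x1) = Suc k"
    using Seq.IH(2)[OF _ _ a(2)] Seq.prems by auto
  have i1: "wf_segment tbl u (compile_cmd k c1 u ?x1) \<and> code_entry k c1 u ?x1 < length tbl \<and> fst (tbl ! code_entry k c1 u ?x1) = Suc k"
    using Seq.IH(1)[OF _ _ a(1)] Seq.prems i2 by auto
  show ?case using i1 i2 wf_segment_append[of tbl u "compile_cmd k c1 u ?x1"] length_compile_cmd[of k c1 u ?x1] Seq.prems by auto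
next
  case (While r c)
  let ?L = "3 + 3 * r + 6 * (k - r)"
  have a: "placed_at tbl u (test_gadget k r u x (code_entry k c (u + ?L) u))" "placed_at tbl (u + ?L) (compile_cmd k c (u + ?L) u)"
    using placed_at_append[of tbl u "test_gadget k r u x (code_entry k c (u + ?L) u)"] While.prems by auto
  have u: "u < length tbl \<and> fst (tbl ! u) = Suc k"
  proof -
    have "u < length tbl" using a(1) by (auto simp: placed_at_def test_gadget_def test_gadget'_def marker_pass_def)
    moreover have "tbl ! u = (Suc k, Rcv [(3, u+1)])"
      using placed_at_gadget[OF a(1)[unfolded test_gadget_def test_gadget'_def] refl] by (auto simp: marker_pass_def dest!: placed_at_Cons)
    ultimately show ?thesis by simp
  qed
  have ib: "wf_segment tbl (u + ?L) (compile_cmd k c (u + ?L) u) \<and> code_entry k c (u + ?L) u < length tbl \<and> fst (tbl ! code_entry k c (u + ?L) u) = Suc k"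
    using While.IH[OF _ _ a(2)] While.prems u by auto
  have it: "wf_segment tbl u (test_gadget k r u x (code_entry k c (u + ?L) u))"
    using wf_test_gadget[OF a(1)] While.prems ib by auto
  show ?case using wf_segment_append[OF it] ib u by simp
qed

definition marker_count :: "nat list \<Rightarrow> nat" where "marker_count w = length (filter (\<lambda>a. a = 2 \<or> a = 3) w)"

lemma marker_count_snoc: "marker_count (w @ [a]) = marker_count w + marker_weight a" by (simp add: marker_count_def marker_weight_def)
lemma marker_count_Cons: "marker_count (a # w) = marker_weight a + marker_count w" by (simp add: marker_count_def marker_weight_def)

section \<open>The loader\<close>

text \<open>The loader writes x unary digits into the queue. Its states 1, 2, 4, ..., 2(x-1) avoid the
  states 2q+1 of the simulated table except 1, which is the image of its dead state 0, and it
  stops in 3, the image of state 1.\<close>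
definition loader_trans :: "nat \<Rightarrow> nat \<Rightarrow> trans" where
  "loader_trans x j = (if j = 0 then 1 else 2*j, Send 1, if Suc j = x then 3 else 2*j+2)"

definition loader :: "nat \<Rightarrow> trans list" where
  "loader x = map (loader_trans x) [0..<x]"

definition list_code_Cons :: "nat \<Rightarrow> nat \<Rightarrow> nat" where
  "list_code_Cons a l = Suc (prod_encode (a, l))"

definition loader_index_nexp :: "nexp" where
  "loader_index_nexp = NDiff (NVar 2) (NAdd (NVar 0) (NConst 1))"
definition loader_rest_nexp :: "nexp" where
  "loader_rest_nexp = NDiff (NVar 2) (NAdd loader_index_nexp (NConst 1))"
definition loader_source_nexp :: "nexp" where
  "loader_source_nexp = NAdd (NMult (NConst 2) loader_index_nexp) (NNot loader_index_nexp)"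
definition loader_target_nexp :: "nexp" where
  "loader_target_nexp = NAdd (NMult (NNot loader_rest_nexp) (NConst 3)) (NMult (NDiff (NConst 1) (NNot loader_rest_nexp)) (NAdd (NMult (NConst 2) loader_index_nexp) (NConst 2)))"
definition loader_step_nexp :: "nexp" where
  "loader_step_nexp = NAdd (NConst 1) (NPair (NPair loader_source_nexp (NPair (NConst 2) loader_target_nexp)) (NVar 1))"

lemma nval_loader_step_nexp: "n < x \<Longrightarrow> nval loader_step_nexp [n, z, x] = list_code_Cons (encode_trans (loader_trans x (x - Suc n))) z"
  by (auto simp: loader_step_nexp_def loader_source_nexp_def loader_target_nexp_def loader_index_nexp_def loader_rest_nexp_def loader_trans_def list_code_Cons_def)

lemma loader_step_nexp_vars_below: "nexp_vars_below loader_step_nexp (Suc (Suc (Suc 0)))"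
  by (simp add: loader_step_nexp_def loader_source_nexp_def loader_target_nexp_def loader_index_nexp_def loader_rest_nexp_def)

definition loader_code_recf :: "recf" where
  "loader_code_recf = Prf (Idf 0) (recf_of_nexp loader_step_nexp)"

lemma eval_loader_code_recf: "n \<le> x \<Longrightarrow> eval loader_code_recf [n, x] (foldr list_code_Cons (map (encode_trans \<circ> loader_trans x) [x-n..<x]) x)"
proof (induction n)
  case 0 then show ?case by (auto simp: loader_code_recf_def intro!: eval_basic_intros)
next
  case (Suc n)
  then have nx: "n < x" by simp
  have ups: "[x - Suc n..<x] = (x - Suc n) # [x - n..<x]"
    using nx by (simp add: upt_conv_Cons Suc_diff_Suc)
  have "eval (recf_of_nexp loader_step_nexp) [n, foldr list_code_Cons (map (encode_trans \<circ> loader_trans x) [x-n..<x]) x, x]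
     (nval loader_step_nexp [n, foldr list_code_Cons (map (encode_trans \<circ> loader_trans x) [x-n..<x]) x, x])"
    by (rule eval_recf_of_nexp) (simp add: loader_step_nexp_vars_below)
  then show ?case using Suc nx ups nval_loader_step_nexp[OF nx] unfolding comp_def by (auto simp: loader_code_recf_def intro: ev_PrS)
qed

lemma list_encode_append: "list_encode (xs @ ys) = foldr list_code_Cons xs (list_encode ys)"
  by (induction xs) (auto simp: list_code_Cons_def)

definition instance_nexp :: "nexp" where
  "instance_nexp = NPair (NAdd (NConst 1) (NPair (NConst (encode_trans (0, Send 3, 1))) (NVar 0)))
     (NConst (prod_encode (0, 4)))"

definition instance_recf :: "recf" where
  "instance_recf = Cnf (recf_of_nexp instance_nexp) [Cnf loader_code_recf [Idf 0, Idf 0]]"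

lemma eval_instance_recf:
  assumes "x = list_encode (map encode_trans T)"
  shows "eval instance_recf [x] (encode_instance ((0, Send 3, 1) # loader x @ T) 0 4)"
proof -
  have h: "eval loader_code_recf [x, x] (foldr list_code_Cons (map (encode_trans \<circ> loader_trans x) [0..<x]) x)"
    using eval_loader_code_recf[of x x] by simp
  have "eval (recf_of_nexp instance_nexp) [foldr list_code_Cons (map (encode_trans \<circ> loader_trans x) [0..<x]) x]
     (nval instance_nexp [foldr list_code_Cons (map (encode_trans \<circ> loader_trans x) [0..<x]) x])"
    by (rule eval_recf_of_nexp) (simp add: instance_nexp_def)
  moreover have "nval instance_nexp [foldr list_code_Cons (map (encode_trans \<circ> loader_trans x) [0..<x]) x]
     = encode_instance ((0, Send 3, 1) # loader x @ T) 0 4"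
    using assms by (simp add: instance_nexp_def encode_instance_def loader_def list_encode_append)
  ultimately show ?thesis using h unfolding instance_recf_def
    by (auto intro!: eval_basic_intros)
qed

section \<open>The diagonal automaton\<close>

fun reg_bound :: "cmd \<Rightarrow> nat" where
  "reg_bound Skip = 0"
| "reg_bound (Inc r) = Suc r"
| "reg_bound (Dec r) = Suc r"
| "reg_bound (Seq c1 c2) = max (reg_bound c1) (reg_bound c2)"
| "reg_bound (While r c) = max (Suc r) (reg_bound c)"

lemma regs_below_reg_bound: "reg_bound c \<le> k \<Longrightarrow> regs_below k c"
  by (induction c) auto

definition zero_registers :: "nat \<Rightarrow> nat \<Rightarrow> entry list" where
  "zero_registers k eP = map (\<lambda>i. (Suc i, Snd 2 (if Suc i = k then eP else Suc (Suc i)))) [0..<k]"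

definition accept_block :: "nat \<Rightarrow> nat \<Rightarrow> entry list" where
  "accept_block k yes = [(Suc k, Snd 4 (yes+1))] @ marker_pass k (yes+1) (entry_or k (yes+3) (yes+3+3*k)) @ rotation k k (yes+3) (yes+3+3*k)
     @ [(Suc k, Rcv [(4, Suc (yes+3+3*k))]), (Suc k, Rcv [])]"

definition test_state :: "nat \<Rightarrow> cmd \<Rightarrow> nat" where
  "test_state k P = Suc k + code_length k P"
definition reject_state :: "nat \<Rightarrow> cmd \<Rightarrow> nat" where
  "reject_state k P = test_state k P + (3 + 3 * 1 + 6 * (k - 1))"
definition program_entry :: "nat \<Rightarrow> cmd \<Rightarrow> nat" where
  "program_entry k P = code_entry k P (Suc k) (test_state k P)"

text \<open>State 0 is dead; states 1, ..., k append the separators of the registers, register 0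
  holding the digits written by the loader; then P runs and register 1 is tested. If it is
  nonzero, the table halts in reject_state; otherwise it sends 4, rotates it to the front and
  receives it.\<close>
definition diagonal_table :: "nat \<Rightarrow> cmd \<Rightarrow> entry list" where
  "diagonal_table k P = [(1, Rcv [])] @ zero_registers k (program_entry k P) @ compile_cmd k P (Suc k) (test_state k P) @
     test_gadget k 1 (test_state k P) (Suc (reject_state k P)) (reject_state k P) @ [(Suc k, Rcv [])] @ accept_block k (Suc (reject_state k P))"

locale diagonal =
  fixes k :: nat and P :: cmd
  assumes two_le_k: "2 \<le> k" and regs_below_P: "regs_below k P"
begin

definition tbl :: "entry list" where
  "tbl = diagonal_table k P"

lemma lengths: "length (zero_registers k e) = k" "length (compile_cmd k P u x) = code_length k P"
  "length (test_gadget k 1 u a b) = 6 + 6 * (k - 1)"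
  by (auto simp: zero_registers_def length_compile_cmd[OF regs_below_P])

lemma placed_zero_registers: "placed_at tbl 1 (zero_registers k (program_entry k P))"
  unfolding tbl_def diagonal_table_def using placed_at_middleI[of 1 "[(1, Rcv [])]"] by simp

lemma placed_program: "placed_at tbl (Suc k) (compile_cmd k P (Suc k) (test_state k P))"
  unfolding tbl_def diagonal_table_def using placed_at_middleI[of "Suc k" "[(1, Rcv [])] @ zero_registers k (program_entry k P)"] lengths by simp

lemma placed_test: "placed_at tbl (test_state k P) (test_gadget k 1 (test_state k P) (Suc (reject_state k P)) (reject_state k P))"
  unfolding tbl_def diagonal_table_def
  using placed_at_middleI[of "test_state k P" "[(1, Rcv [])] @ zero_registers k (program_entry k P) @ compile_cmd k P (Suc k) (test_state k P)"] lengths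
  by (simp add: test_state_def)

lemma placed_reject: "placed_at tbl (reject_state k P) [(Suc k, Rcv [])]"
  unfolding tbl_def diagonal_table_def
  using placed_at_middleI[of "reject_state k P" "[(1, Rcv [])] @ zero_registers k (program_entry k P) @ compile_cmd k P (Suc k) (test_state k P) @
     test_gadget k 1 (test_state k P) (Suc (reject_state k P)) (reject_state k P)" "[(Suc k, Rcv [])]" "accept_block k (Suc (reject_state k P))"] lengths
  by (simp add: test_state_def reject_state_def)

lemma placed_accept: "placed_at tbl (Suc (reject_state k P)) (accept_block k (Suc (reject_state k P)))"
  unfolding tbl_def diagonal_table_def
  using placed_at_middleI[of "Suc (reject_state k P)" "[(1, Rcv [])] @ zero_registers k (program_entry k P) @ compile_cmd k P (Suc k) (test_state k P) @
     test_gadget k 1 (test_state k P) (Suc (reject_state k P)) (reject_state k P) @ [(Suc k, Rcv [])]" _ "[]"] lengths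
  by (simp add: test_state_def reject_state_def)

lemma length_tbl: "length tbl = Suc (reject_state k P) + 3 * k + 5"
  unfolding tbl_def diagonal_table_def using lengths by (simp add: test_state_def reject_state_def accept_block_def marker_pass_def)

lemma tbl_0: "tbl ! 0 = (1, Rcv [])"
  unfolding tbl_def diagonal_table_def by simp

lemma one_le_k: "1 \<le> k" using two_le_k by simp

lemma accept_state_entry: "Suc (reject_state k P) < length tbl \<and> tbl ! Suc (reject_state k P) = (Suc k, Snd 4 (Suc (reject_state k P) + 1))"
  using placed_at_Cons[OF placed_accept[unfolded accept_block_def append_Cons append_Nil]] by simp

lemma reject_state_entry: "reject_state k P < length tbl \<and> tbl ! reject_state k P = (Suc k, Rcv [])"
  using placed_at_Cons[OF placed_reject] by simp

lemma wf_accept: "wf_segment tbl (Suc (reject_state k P)) (accept_block k (Suc (reject_state k P)))"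
proof -
  define y where "y = Suc (reject_state k P)"
  define b where "b = y + 3 + 3 * k"
  have a0: "placed_at tbl y ((Suc k, Snd 4 (y+1)) # (marker_pass k (y+1) (entry_or k (y+1+2) b) @ rotation k k (y+1+2) b
     @ (Suc k, Rcv [(4, Suc b)]) # [(Suc k, Rcv [])]))"
    using placed_accept unfolding y_def[symmetric] accept_block_def b_def by (simp add: numeral_eq_Suc)
  note a0c = placed_at_Cons[OF a0]
  have a: "placed_at tbl (y+1) (marker_pass k (y+1) (entry_or k (y+1+2) b) @ rotation k k (y+1+2) b @ (Suc k, Rcv [(4, Suc b)]) # [(Suc k, Rcv [])])"
    using a0c by simp
  have bb: "b = y + 1 + 2 + 3 * k" by (simp add: b_def)
  note ap = placed_at_gadget[OF a bb]
  have lb: "Suc b < length tbl" "tbl ! Suc b = (Suc k, Rcv [])" using placed_at_Cons[OF conjunct2[OF conjunct2[OF conjunct2[OF conjunct2[OF ap]]]]] by auto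
  have we: "wf_state tbl b" by (rule wf_state_recv[of _ _ "Suc k"]) (use ap lb in \<open>auto simp: marker_weight_def\<close>)
  have wr: "wf_segment tbl (Suc b) [(Suc k, Rcv [])]" by (rule wf_segment_Cons) (auto intro: wf_state_recv[of _ _ "Suc k"] simp: lb)
  note g = wf_gadget[OF a bb one_le_k _ we wr]
  have w0: "wf_state tbl y" by (rule wf_state_send[of _ _ "Suc k" 4 "y+1"]) (use a0c g in \<open>auto simp: marker_weight_def\<close>)
  have "wf_segment tbl y ((Suc k, Snd 4 (y+1)) # (marker_pass k (y+1) (entry_or k (y+1+2) b) @ rotation k k (y+1+2) b
     @ (Suc k, Rcv [(4, Suc b)]) # [(Suc k, Rcv [])]))"
    by (rule wf_segment_Cons[OF w0]) (use g in simp)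
  then show ?thesis unfolding y_def[symmetric] accept_block_def b_def by (simp add: numeral_eq_Suc)
qed

lemma wf_test: "wf_segment tbl (test_state k P) (test_gadget k 1 (test_state k P) (Suc (reject_state k P)) (reject_state k P)) \<and> test_state k P < length tbl \<and> fst (tbl ! test_state k P) = Suc k"
  by (rule wf_test_gadget[OF placed_test]) (use two_le_k accept_state_entry reject_state_entry in auto)

lemma wf_program: "wf_segment tbl (Suc k) (compile_cmd k P (Suc k) (test_state k P)) \<and> program_entry k P < length tbl \<and> fst (tbl ! program_entry k P) = Suc k"
  unfolding program_entry_def by (rule wf_compile_cmd[OF regs_below_P one_le_k placed_program]) (use wf_test in auto)

lemma zero_registers_nth: "i < k \<Longrightarrow> tbl ! Suc i = (Suc i, Snd 2 (if Suc i = k then program_entry k P else Suc (Suc i)))"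
  using placed_zero_registers unfolding placed_at_def zero_registers_def by auto

lemma wf_zero_registers: "wf_segment tbl 1 (zero_registers k (program_entry k P))"
  unfolding wf_segment_def
proof (intro allI impI)
  fix i assume "i < length (zero_registers k (program_entry k P))"
  then have i: "i < k" by (simp add: zero_registers_def)
  have lt: "Suc k < length tbl" using length_tbl by (simp add: reject_state_def test_state_def)
  show "wf_state tbl (1 + i)"
  proof (cases "Suc i = k")
    case True
    show ?thesis using zero_registers_nth[OF i] True wf_program by (auto intro!: wf_state_send simp: marker_weight_def)
  next
    case False
    then have i2: "Suc i < k" using i by simp
    show ?thesis using zero_registers_nth[OF i] zero_registers_nth[OF i2] False lt i2 by (auto intro!: wf_state_send simp: marker_weight_def)
  qed
qed

lemma wf_tbl: "wf_segment tbl 0 tbl"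
proof -
  have w0: "wf_state tbl 0" using tbl_0 by (auto intro: wf_state_recv)
  have wno: "wf_segment tbl (reject_state k P) [(Suc k, Rcv [])]" using reject_state_entry by (auto intro!: wf_segment_Cons wf_state_recv)
  have "wf_segment tbl (reject_state k P) ([(Suc k, Rcv [])] @ accept_block k (Suc (reject_state k P)))"
    using wf_segment_append[OF wno] wf_accept by simp
  then have "wf_segment tbl (test_state k P) (test_gadget k 1 (test_state k P) (Suc (reject_state k P)) (reject_state k P) @ [(Suc k, Rcv [])] @ accept_block k (Suc (reject_state k P)))"
    using wf_segment_append[OF conjunct1[OF wf_test]] lengths by (simp add: reject_state_def)
  then have "wf_segment tbl (Suc k) (compile_cmd k P (Suc k) (test_state k P) @ test_gadget k 1 (test_state k P) (Suc (reject_state k P)) (reject_state k P) @ [(Suc k, Rcv [])] @ accept_block k (Suc (reject_state k P)))"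
    using wf_segment_append[OF conjunct1[OF wf_program]] lengths by (simp add: test_state_def)
  then have "wf_segment tbl 1 (zero_registers k (program_entry k P) @ compile_cmd k P (Suc k) (test_state k P) @ test_gadget k 1 (test_state k P) (Suc (reject_state k P)) (reject_state k P) @ [(Suc k, Rcv [])] @ accept_block k (Suc (reject_state k P)))"
    using wf_segment_append[OF wf_zero_registers] lengths by simp
  then show ?thesis unfolding tbl_def[symmetric] diagonal_table_def using w0
    by (simp add: tbl_def diagonal_table_def wf_segment_Cons)
qed

lemma wf_state_tbl: "i < length tbl \<Longrightarrow> wf_state tbl i"
  using wf_tbl unfolding wf_segment_def by auto

definition Tsim :: "trans list" where
  "Tsim = map (\<lambda>(q, \<alpha>, q'). (2*q+1, \<alpha>, 2*q'+1)) (table_trans tbl)"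
definition self_code :: "nat" where
  "self_code = list_encode (map encode_trans Tsim)"
definition Adiag :: "trans list" where
  "Adiag = (0, Send 3, 1) # loader self_code @ Tsim"

lemma mem_Tsim: "(q, \<alpha>, q') \<in> set Tsim \<longleftrightarrow> (\<exists>i p. q = 2*i+1 \<and> q' = 2*p+1 \<and> (i, \<alpha>, p) \<in> set (table_trans tbl))"
  unfolding Tsim_def by force

lemma mem_Adiag: "(q, \<alpha>, q') \<in> set Adiag \<longleftrightarrow> (q, \<alpha>, q') = (0, Send 3, 1) \<or> (\<exists>j<self_code. (q, \<alpha>, q') = loader_trans self_code j) \<or>
   (\<exists>i p. q = 2*i+1 \<and> q' = 2*p+1 \<and> (i, \<alpha>, p) \<in> set (table_trans tbl))"
  unfolding Adiag_def loader_def using mem_Tsim by auto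

lemma table_trans_1: "(1, Send 2, if 1 = k then program_entry k P else 2) \<in> set (table_trans tbl)"
  using zero_registers_nth[of 0] two_le_k length_tbl by (auto simp: mem_table_trans)

lemma self_code_pos: "1 \<le> self_code"
proof -
  have "Tsim \<noteq> []" using table_trans_1 mem_Tsim[of 3] by force
  then show ?thesis unfolding self_code_def by (cases Tsim) auto
qed

lemma no_table_trans_0: "(0, \<alpha>, p) \<notin> set (table_trans tbl)"
  using tbl_0 by (simp add: mem_table_trans)

lemma loader_source_not_table_state: "i \<noteq> 0 \<Longrightarrow> fst (loader_trans x j) \<noteq> 2*i+1"
  by (cases "j = 0") (simp_all add: loader_trans_def, presburger)

lemma loader_source_inj: "fst (loader_trans x j) = fst (loader_trans x j') \<Longrightarrow> j = j'"
  by (auto simp: loader_trans_def split: if_splits)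

lemma Tsim_source:
  assumes "(q, \<alpha>, q') \<in> set Tsim"
  obtains i where "i \<noteq> 0" "q = 2*i+1"
proof -
  obtain i p where "q = 2*i+1" "(i, \<alpha>, p) \<in> set (table_trans tbl)"
    using assms by (auto simp: mem_Tsim)
  moreover then have "i \<noteq> 0" using no_table_trans_0[of \<alpha> p] by metis
  ultimately show thesis using that by blast
qed

lemma mem_Adiag_from_table_state:
  assumes "i \<noteq> 0"
  shows "(2*i+1, \<alpha>, q') \<in> set Adiag \<longleftrightarrow> (\<exists>p. q' = 2*p+1 \<and> (i, \<alpha>, p) \<in> set (table_trans tbl))"
proof
  assume "(2*i+1, \<alpha>, q') \<in> set Adiag"
  moreover have "(2*i+1, \<alpha>, q') \<noteq> loader_trans self_code j" for j
    using loader_source_not_table_state[OF assms, of self_code j] by (metis fst_conv)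
  ultimately show "\<exists>p. q' = 2*p+1 \<and> (i, \<alpha>, p) \<in> set (table_trans tbl)"
    unfolding mem_Adiag by auto
qed (auto simp: mem_Adiag)

lemma deterministic_Adiag: "deterministic Adiag"
proof -
  have "deterministic ((0, Send 3, 1) # loader self_code)"
  proof (rule deterministic_if_source_inj)
    fix t t' assume "t \<in> set ((0, Send 3, 1) # loader self_code)" "t' \<in> set ((0, Send 3, 1) # loader self_code)"
      and "fst t = fst t'"
    moreover have "fst (loader_trans self_code j) \<noteq> 0" for j by (simp add: loader_trans_def)
    ultimately show "t = t'"
      unfolding loader_def by (auto dest: loader_source_inj) (metis less_not_refl)+
  qed
  moreover have "deterministic (table_trans tbl)"
  proof (rule deterministic_table_trans)
    fix i l assume "i < length tbl" "snd (tbl ! i) = Rcv l"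
    then show "distinct (map fst l)" using wf_state_tbl[of i] by (simp add: wf_state_def)
  qed
  then have "deterministic Tsim"
    unfolding Tsim_def by (rule deterministic_map_states[rotated]) (simp add: inj_def)
  moreover have "fst ` set ((0, Send 3, 1) # loader self_code) \<inter> fst ` set Tsim = {}"
  proof -
    have "fst t \<noteq> fst t'"
      if t: "t \<in> set ((0, Send 3, 1) # loader self_code)" and t': "t' \<in> set Tsim" for t t'
    proof -
      obtain q \<alpha> q' where q: "t' = (q, \<alpha>, q')" by (cases t')
      with t' obtain i where "i \<noteq> 0" "q = 2*i+1" by (auto elim: Tsim_source)
      then show ?thesis using t q loader_source_not_table_state[of i self_code] unfolding loader_def by auto
    qed
    then show ?thesis by blast
  qed
  ultimately have "deterministic (((0, Send 3, 1) # loader self_code) @ Tsim)"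
    by (rule deterministic_append)
  then show ?thesis by (simp add: Adiag_def)
qed

text \<open>Even states belong to the loader, whose queue holds just the marker 3; the entry (1, Rcv [])
  of the dead table state 0 predicts the same for the loader's first state 1.\<close>
definition potential :: "nat \<Rightarrow> nat" where "potential q = (if even q then 1 else fst (tbl ! (q div 2)))"

definition marker_inv :: "config \<Rightarrow> bool" where
  "marker_inv c \<longleftrightarrow> fst c \<noteq> 0 \<and> marker_count (snd c) = potential (fst c) \<and> 1 \<le> potential (fst c) \<and> (odd (fst c) \<longrightarrow> fst c div 2 < length tbl)"

lemma tbl_1: "fst (tbl ! 1) = 1" using zero_registers_nth[of 0] two_le_k by simp

lemma marker_inv_step: "marker_inv (q, w) \<Longrightarrow> step Adiag (q, w) \<alpha> (q', w') \<Longrightarrow> marker_inv (q', w')"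
proof -
  assume I: "marker_inv (q, w)" and st: "step Adiag (q, w) \<alpha> (q', w')"
  have t: "(q, \<alpha>, q') \<in> set Adiag" using st by (cases \<alpha>) auto
  consider (a) "(q, \<alpha>, q') = (0, Send 3, 1)" | (b) j where "j < self_code" "(q, \<alpha>, q') = loader_trans self_code j"
      | (c) i p where "q = 2*i+1" "q' = 2*p+1" "(i, \<alpha>, p) \<in> set (table_trans tbl)"
      using t mem_Adiag by blast
  then show ?thesis
  proof cases
    case a then show ?thesis using I by (simp add: marker_inv_def)
  next
    case b
    have e: "\<alpha> = Send 1" "q = (if j = 0 then 1 else 2*j)" "q' = (if Suc j = self_code then 3 else 2*j+2)"
      using b(2) by (auto simp: loader_trans_def)
    have w': "w' = w @ [1]" using st e by simp
    have pq: "potential q = 1" using e(2) tbl_0 by (auto simp: potential_def)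
    have pq': "potential q' = 1" using e(3) tbl_1 by (auto simp: potential_def)
    have l: "odd q' \<longrightarrow> q' div 2 < length tbl" using e(3) length_tbl by auto
    show ?thesis using I w' pq pq' l e(3) by (auto simp: marker_inv_def marker_count_snoc marker_weight_def)
  next
    case c
    have i: "i < length tbl" using c(3) by (simp add: mem_table_trans)
    have wi: "wf_state tbl i" by (rule wf_state_tbl[OF i])
    have pi: "potential q = fst (tbl ! i)" using c(1) by (simp add: potential_def)
    have pp: "potential q' = fst (tbl ! p)" using c(2) by (simp add: potential_def)
    show ?thesis
    proof (cases "snd (tbl ! i)")
      case (Snd a p0)
      then have "\<alpha> = Send a" "p = p0" using c(3) by (auto simp: mem_table_trans)
      then have "w' = w @ [a]" "p < length tbl" "fst (tbl ! p) = fst (tbl ! i) + marker_weight a"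
        using st wi Snd by (auto simp: wf_state_def)
      then show ?thesis using I pi pp c(2) by (auto simp: marker_inv_def marker_count_snoc)
    next
      case (Rcv l)
      then obtain a where a: "\<alpha> = Recv a" "(a, p) \<in> set l" using c(3) by (auto simp: mem_table_trans)
      then have "w = a # w'" "p < length tbl" "fst (tbl ! p) + marker_weight a = fst (tbl ! i)"
        using st wi Rcv by (auto simp: wf_state_def)
      moreover have "1 \<le> fst (tbl ! p)" using wf_state_tbl[OF \<open>p < length tbl\<close>] by (simp add: wf_state_def)
      ultimately show ?thesis using I pi pp c(2) by (auto simp: marker_inv_def marker_count_Cons)
    qed
  qed
qed

lemma marker_inv_steps: "steps Adiag c \<tau> c' \<Longrightarrow> marker_inv c \<Longrightarrow> marker_inv c'"
proof (induction \<tau> arbitrary: c)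
  case Nil then show ?case by simp
next
  case (Cons \<alpha> \<tau>)
  then obtain c1 where "step Adiag c \<alpha> c1" "steps Adiag c1 \<tau> c'" by auto
  moreover have "marker_inv c1" using marker_inv_step[of "fst c" "snd c" \<alpha> "fst c1" "snd c1"] calculation Cons.prems by simp
  ultimately show ?case using Cons.IH by blast
qed

lemma Adiag_from_0: "(0, \<alpha>, q) \<in> set Adiag \<Longrightarrow> \<alpha> = Send 3 \<and> q = 1"
proof -
  assume t: "(0, \<alpha>, q) \<in> set Adiag"
  have nc: "\<not> (\<exists>j. (0, \<alpha>, q) = loader_trans self_code j)" by (auto simp: loader_trans_def split: if_splits)
  have "(0, \<alpha>, q) = (0, Send 3, 1)" using t nc unfolding mem_Adiag by auto
  then show ?thesis by simp
qed

lemma first_step: "step Adiag (0, []) \<alpha> c1 \<Longrightarrow> \<alpha> = Send 3 \<and> c1 = (1, [3])"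
proof -
  assume st: "step Adiag (0, []) \<alpha> c1"
  obtain q1 w1 where c1: "c1 = (q1, w1)" by fastforce
  have t: "(0, \<alpha>, q1) \<in> set Adiag" and snd: "\<exists>a. \<alpha> = Send a" using st c1 by (cases \<alpha>; auto)+
  have "\<alpha> = Send 3 \<and> q1 = 1" using Adiag_from_0[OF t] .
  then show ?thesis using st c1 by auto
qed

lemma R1_Adiag: "R1 Adiag 0"
  unfolding R1_def
proof (intro allI impI)
  fix \<tau> q w assume h: "steps Adiag (0, []) \<tau> (q, w)"
  show "\<tau> = [] \<or> w \<noteq> []"
  proof (cases \<tau>)
    case Nil then show ?thesis by simp
  next
    case (Cons \<alpha> \<tau>')
    then obtain c1 where c1: "step Adiag (0, []) \<alpha> c1" "steps Adiag c1 \<tau>' (q, w)" using h by auto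
    then have "c1 = (1, [3])" using first_step by blast
    moreover have "marker_inv (1, [3])" using tbl_0 length_tbl by (simp add: marker_inv_def potential_def marker_count_def)
    ultimately have "marker_inv (q, w)" using marker_inv_steps c1(2) by blast
    then have "1 \<le> marker_count w" by (simp add: marker_inv_def)
    then show ?thesis by (auto simp: marker_count_def)
  qed
qed

lemma R2_Adiag: "R2 Adiag 0"
  unfolding R2_def
proof (intro allI impI)
  fix \<alpha> q assume t: "(0, \<alpha>, q) \<in> set Adiag"
  show "\<exists>a. \<alpha> = Send a" using Adiag_from_0[OF t] by auto
qed

lemma lift_steps: "steps (table_trans tbl) (q, w) \<tau> (q', w') \<Longrightarrow> steps Adiag (2*q+1, w) \<tau> (2*q'+1, w')"
proof (induction \<tau> arbitrary: q w)
  case Nil then show ?case by simp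
next
  case (Cons \<alpha> \<tau>)
  then obtain q1 w1 where s: "step (table_trans tbl) (q, w) \<alpha> (q1, w1)" "steps (table_trans tbl) (q1, w1) \<tau> (q', w')"
    by (auto simp del: step.simps)
  have t: "(q, \<alpha>, q1) \<in> set (table_trans tbl)" using s(1) by (cases \<alpha>) auto
  then have "(2*q+1, \<alpha>, 2*q1+1) \<in> set Adiag" using mem_Adiag by blast
  then have "step Adiag (2*q+1, w) \<alpha> (2*q1+1, w1)" using s(1) by (cases \<alpha>) auto
  then show ?case using Cons.IH[OF s(2)] by auto
qed

lemma lift_reach: "reach (table_trans tbl) (q, w) (q', w') \<Longrightarrow> reach Adiag (2*q+1, w) (2*q'+1, w')"
  unfolding reach_def using lift_steps by blast

lemma reach_Adiag_send: "(q, Send a, q') \<in> set Adiag \<Longrightarrow> reach Adiag (q, w) (q', w @ [a])"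
  unfolding reach_def by (intro exI[of _ "[Send a]"]) auto

lemma loader_run: "j < self_code \<Longrightarrow> reach Adiag (fst (loader_trans self_code j), 3 # replicate j 1) (3, 3 # replicate self_code 1)"
proof (induction "self_code - j" arbitrary: j rule: less_induct)
  case less
  have t: "loader_trans self_code j \<in> set Adiag" using less.prems by (simp add: Adiag_def loader_def)
  show ?case
  proof (cases "Suc j = self_code")
    case True
    then have "(fst (loader_trans self_code j), Send 1, 3) \<in> set Adiag" using t by (simp add: loader_trans_def)
    from reach_Adiag_send[OF this, of "3 # replicate j 1"] show ?thesis using True[symmetric] by (simp add: replicate_append_same)
  next
    case False
    then have j1: "Suc j < self_code" using less.prems by simp
    have "(fst (loader_trans self_code j), Send 1, fst (loader_trans self_code (Suc j))) \<in> set Adiag" using t False by (simp add: loader_trans_def)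
    from reach_Adiag_send[OF this, of "3 # replicate j 1"] have r1: "reach Adiag (fst (loader_trans self_code j), 3 # replicate j 1) (fst (loader_trans self_code (Suc j)), 3 # replicate (Suc j) 1)"
      by (simp add: replicate_append_same)
    have r2: "reach Adiag (fst (loader_trans self_code (Suc j)), 3 # replicate (Suc j) 1) (3, 3 # replicate self_code 1)"
      using less.hyps[of "Suc j"] j1 less.prems by simp
    show ?thesis using reach_trans[OF r1 r2] .
  qed
qed

lemma zero_registers_run: "j < k \<Longrightarrow> reach (table_trans tbl) (Suc j, w) (program_entry k P, w @ replicate (k - j) 2)"
proof (induction "k - j" arbitrary: j w rule: less_induct)
  case less
  have lt: "Suc j < length tbl" using length_tbl less.prems by (simp add: reject_state_def test_state_def)
  show ?case
  proof (cases "Suc j = k")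
    case True
    have "reach (table_trans tbl) (Suc j, w) (program_entry k P, w @ [2])" using reach_send[OF lt] zero_registers_nth[OF less.prems] True by simp
    moreover have "k - j = 1" using True by simp
    ultimately show ?thesis by simp
  next
    case False
    then have j1: "Suc j < k" using less.prems by simp
    have r1: "reach (table_trans tbl) (Suc j, w) (Suc (Suc j), w @ [2])" using reach_send[OF lt] zero_registers_nth[OF less.prems] False by simp
    have r2: "reach (table_trans tbl) (Suc (Suc j), w @ [2]) (program_entry k P, (w @ [2]) @ replicate (k - Suc j) 2)"
      using less.hyps[of "Suc j" "w @ [2]"] j1 by simp
    have "k - j = Suc (k - Suc j)" using j1 by simp
    then show ?thesis using reach_trans[OF r1 r2] by (simp add: replicate_append_same[symmetric])
  qed
qed

definition init_regs :: "nat \<Rightarrow> nat" where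
  "init_regs = (\<lambda>i. if i = 0 then self_code else 0)"

lemma queue_code_init_regs: "queue_code k init_regs = 3 # replicate self_code 1 @ replicate k 2"
proof -
  have "[0..<k] = 0 # [1..<k]" using two_le_k by (simp add: upt_conv_Cons)
  moreover have "map init_regs [1..<k] = replicate (k - 1) 0" by (auto simp: init_regs_def intro: nth_equalityI)
  moreover have "ublocks (replicate n 0) = replicate n 2" for n by (induction n) (auto simp: ublock_def)
  ultimately have "queue_code k init_regs = 3 # replicate self_code 1 @ 2 # replicate (k - 1) 2"
    by (simp add: queue_code_def init_regs_def ublock_def)
  then show ?thesis using two_le_k by (cases k) auto
qed

lemma init_run: "reach Adiag (0, []) (2 * program_entry k P + 1, queue_code k init_regs)"
proof -
  have r0: "reach Adiag (0, []) (1, [3])" using reach_Adiag_send[of 0 3 1 "[]"] by (simp add: Adiag_def)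
  have r1: "reach Adiag (1, [3]) (3, 3 # replicate self_code 1)" using loader_run[of 0] self_code_pos by (simp add: loader_trans_def)
  have r2: "reach Adiag (3, 3 # replicate self_code 1) (2 * program_entry k P + 1, 3 # replicate self_code 1 @ replicate k 2)"
    using lift_reach[OF zero_registers_run[of 0 "3 # replicate self_code 1"]] two_le_k by simp
  show ?thesis using reach_trans[OF r0 reach_trans[OF r1 r2]] queue_code_init_regs by simp
qed

lemma program_run: "exec P init_regs s1 \<Longrightarrow> reach Adiag (0, []) (2 * (if s1 1 = 0 then Suc (reject_state k P) else reject_state k P) + 1, queue_code k s1)"
proof -
  assume e: "exec P init_regs s1"
  have r1: "reach (table_trans tbl) (program_entry k P, queue_code k init_regs) (test_state k P, queue_code k s1)"
    using compile_cmd_simulates[OF e regs_below_P placed_program] by (simp add: program_entry_def)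
  have r2: "reach (table_trans tbl) (test_state k P, queue_code k s1) (if s1 1 = 0 then Suc (reject_state k P) else reject_state k P, queue_code k s1)"
    using run_test_gadget[OF placed_test, of s1] two_le_k by simp
  show ?thesis using reach_trans[OF init_run lift_reach[OF reach_trans[OF r1 r2]]] .
qed

lemma reject_stuck: "\<not> step Adiag (2 * reject_state k P + 1, w) \<alpha> c"
proof
  assume "step Adiag (2 * reject_state k P + 1, w) \<alpha> c"
  then obtain q' where "(2 * reject_state k P + 1, \<alpha>, q') \<in> set Adiag"
    by (cases \<alpha>; cases c) auto
  then show False
    using mem_Adiag_from_table_state[of "reject_state k P"] reject_state_entry
    by (auto simp: reject_state_def mem_table_trans)
qed

lemma accept_receives: "reach Adiag (0, []) (2 * Suc (reject_state k P) + 1, queue_code k s1) \<Longrightarrow> can_receive Adiag 0 4"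
proof -
  assume r0: "reach Adiag (0, []) (2 * Suc (reject_state k P) + 1, queue_code k s1)"
  define y where "y = Suc (reject_state k P)"
  define b where "b = y + 3 + 3 * k"
  have a0: "placed_at tbl y ((Suc k, Snd 4 (y+1)) # (marker_pass k (y+1) (entry_or k (y+1+2) b) @ rotation k k (y+1+2) b
     @ (Suc k, Rcv [(4, Suc b)]) # [(Suc k, Rcv [])]))"
    using placed_accept unfolding y_def[symmetric] accept_block_def b_def by (simp add: numeral_eq_Suc)
  note a0c = placed_at_Cons[OF a0]
  have a: "placed_at tbl (y+1) (marker_pass k (y+1) (entry_or k (y+1+2) b) @ rotation k k (y+1+2) b @ (Suc k, Rcv [(4, Suc b)]) # [(Suc k, Rcv [])])"
    using a0c by simp
  have bb: "b = y + 1 + 2 + 3 * k" by (simp add: b_def)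
  note ap = placed_at_gadget[OF a bb]
  have r1: "reach (table_trans tbl) (y, queue_code k s1) (y+1, queue_code k s1 @ [4])"
    using reach_send[of y tbl 4 "y+1" "queue_code k s1"] a0c by simp
  have r2: "reach (table_trans tbl) (y+1, 3 # ublocks (map s1 [0..<k]) @ [4]) (b, [4] @ [3] @ ublocks (map s1 [0..<k]))"
    by (rule run_to_register[OF conjunct1[OF ap] conjunct1[OF conjunct2[OF ap]]]) simp
  have r12: "reach (table_trans tbl) (y, queue_code k s1) (b, [4, 3] @ ublocks (map s1 [0..<k]))"
    using reach_trans[OF r1] r2 by (simp add: queue_code_def)
  obtain \<rho> where \<rho>: "steps Adiag (0, []) \<rho> (2 * b + 1, [4, 3] @ ublocks (map s1 [0..<k]))"
    using reach_trans[OF r0 lift_reach[OF r12[unfolded y_def]]] unfolding reach_def y_def by auto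
  have "(b, Recv 4, Suc b) \<in> set (table_trans tbl)" using ap by (simp add: mem_table_trans)
  then have "(2 * b + 1, Recv 4, 2 * Suc b + 1) \<in> set Adiag" using mem_Adiag by blast
  then have "steps Adiag (2 * b + 1, [4, 3] @ ublocks (map s1 [0..<k])) [Recv 4] (2 * Suc b + 1, 3 # ublocks (map s1 [0..<k]))"
    by simp
  then have "steps Adiag (0, []) (\<rho> @ [Recv 4]) (2 * Suc b + 1, 3 # ublocks (map s1 [0..<k]))"
    using \<rho> steps_append by blast
  then show ?thesis unfolding can_receive_def is_trace_def by blast
qed

lemma reject_not_receives: "reach Adiag (0, []) (2 * reject_state k P + 1, w) \<Longrightarrow> \<not> can_receive Adiag 0 4"
proof
  assume r: "reach Adiag (0, []) (2 * reject_state k P + 1, w)" and cr: "can_receive Adiag 0 4"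
  obtain \<rho> where \<rho>: "steps Adiag (0, []) \<rho> (2 * reject_state k P + 1, w)" "Recv 4 \<notin> set \<rho>" using r unfolding reach_def by blast
  obtain \<tau> c where "steps Adiag (0, []) (\<tau> @ [Recv 4]) c" using cr unfolding can_receive_def is_trace_def by blast
  then obtain \<rho>' where "\<rho> = (\<tau> @ [Recv 4]) @ \<rho>'" using run_prefix_of_stuck_run[OF deterministic_Adiag \<rho>(1) reject_stuck] by blast
  then show False using \<rho>(2) by simp
qed

lemma can_receive_iff_output_zero:
  assumes "exec P init_regs s"
  shows "can_receive Adiag 0 4 \<longleftrightarrow> s 1 = 0"
  using program_run[OF assms] accept_receives reject_not_receives by (cases "s 1 = 0") auto

end

theorem lemma3p1:
  shows "\<not> (\<exists>f. \<forall>\<Delta> q0 m. R1 \<Delta> q0 \<and> R2 \<Delta> q0 \<longrightarrow>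
             eval f [encode_instance \<Delta> q0 m] (if can_receive \<Delta> q0 m then 1 else 0))"
proof
  assume "\<exists>f. \<forall>\<Delta> q0 m. R1 \<Delta> q0 \<and> R2 \<Delta> q0 \<longrightarrow>
             eval f [encode_instance \<Delta> q0 m] (if can_receive \<Delta> q0 m then 1 else 0)"
  then obtain F where F: "\<And>\<Delta> q0 m. R1 \<Delta> q0 \<Longrightarrow> R2 \<Delta> q0 \<Longrightarrow>
             eval F [encode_instance \<Delta> q0 m] (if can_receive \<Delta> q0 m then 1 else 0)" by blast
  define Pc where "Pc = compile_recf (Cnf F [instance_recf]) [0] 1 2"
  interpret diagonal "max 2 (reg_bound Pc)" Pc
    by unfold_locales (auto intro: regs_below_reg_bound)
  define v where "v = (if can_receive Adiag 0 4 then 1 else 0 :: nat)"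
  have "map init_regs [0] = [self_code]" by (simp add: init_regs_def)
  moreover have "eval (Cnf F [instance_recf]) [self_code] v"
  proof (rule eval_Cnf_singleI)
    show "eval instance_recf [self_code] (encode_instance Adiag 0 4)"
      unfolding Adiag_def by (rule eval_instance_recf) (simp add: self_code_def)
    show "eval F [encode_instance Adiag 0 4] v"
      unfolding v_def by (rule F[OF R1_Adiag R2_Adiag])
  qed
  ultimately obtain s where "exec Pc init_regs s" "result_written 2 1 v init_regs s"
    using compiles_correctlyD[OF compiles_correctly_all, of "Cnf F [instance_recf]" init_regs "[0]" v 2 1,
      folded Pc_def] by auto
  then show False
    using can_receive_iff_output_zero by (auto simp: result_written_def v_def split: if_splits)
qed

end
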